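(* Let $K_6=(V,E)$ be the complete graph on 6 nodes and $P_{\mathrm{TSP}}(6)=\operatorname{conv}\{\chi(T): T\text{ a Hamiltonian cycle in }K_6\}$, with circuits taken with respect to a minimal linear description of $P_{\mathrm{TSP}}(6)$ (every inequality facet-defining). Then $\mathcal{CD}(P_{\mathrm{TSP}}(6))=1$.
   Context: $\chi(T)\in\{0,1\}^E$ is the characteristic vector of $T$. Circuits: for a polytope $P=\{\bm{x}: A\bm{x}=\bm{b},\ B\bm{x}\le \bm{d}\}$ given by a fixed linear system, a nonzero vector $\bm{g}$ is a circuit of $P$ if $A\bm{g}=\bm{0}$ and $\operatorname{supp}(B\bm{g})$ is inclusion-minimal among the sets $\operatorname{supp}(B\bm{y})$ with $A\bm{y}=\bm{0}$, $\bm{y}\neq\bm{0}$. A point $\bm{x}''\in P$ is one circuit step from $\bm{x}'\in P$ if $\bm{x}''=\bm{x}'+\alpha\bm{c}$ for a circuit $\bm{c}$ and $\alpha>0$ maximal such that $\bm{x}'+\alpha\bm{c}\in P$. A circuit walk of length $l$ is a sequence $\bm{z}^0,\dots,\bm{z}^l$ in $P$ with each $\bm{z}^i$ one circuit step from $\bm{z}^{i-1}$; the circuit distance is the length of a shortest circuit walk from one point to another, and $\mathcal{CD}(P)$ is the maximum circuit distance over ordered pairs of vertices of $P$. *)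

theory Defs
  imports "HOL-Analysis.Analysis"
begin

typedef edge6 = "{e :: nat set. \<exists>i j. i < 6 \<and> j < 6 \<and> i \<noteq> j \<and> e = {i, j}}"
  by (rule exI[of _ "{0, 1}"]) (simp, rule exI[of _ 0], simp, rule exI[of _ 1], simp)

instance edge6 :: finite
proof
  have "{e :: nat set. \<exists>i j. i < 6 \<and> j < 6 \<and> i \<noteq> j \<and> e = {i, j}}
        \<subseteq> (\<lambda>(i, j). {i, j}) ` ({..<6} \<times> {..<6})"
    by auto
  hence "finite {e :: nat set. \<exists>i j. i < 6 \<and> j < 6 \<and> i \<noteq> j \<and> e = {i, j}}"
    by (rule finite_subset) auto
  hence "finite (Rep_edge6 -` {e :: nat set. \<exists>i j. i < 6 \<and> j < 6 \<and> i \<noteq> j \<and> e = {i, j}})"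
    by (rule finite_vimageI) (simp add: Rep_edge6_inject inj_on_def)
  thus "finite (UNIV :: edge6 set)"
    using Rep_edge6 by (metis (no_types, lifting) UNIV_eq_I vimageI2)
qed

definition ham_cycle6 :: "edge6 set \<Rightarrow> bool" where
  "ham_cycle6 T \<longleftrightarrow> (\<exists>vs :: nat list. length vs = 6 \<and> distinct vs \<and> set vs = {..<6} \<and>
      T = {e. \<exists>k<6. Rep_edge6 e = {vs ! k, vs ! ((k + 1) mod 6)}})"

definition chi :: "edge6 set \<Rightarrow> real ^ edge6" where
  "chi T = (\<chi> e. if e \<in> T then 1 else 0)"

definition P_TSP6 :: "(real ^ edge6) set" where
  "P_TSP6 = convex hull (chi ` {T. ham_cycle6 T})"

definition lin_sys_set ::
  "('a::euclidean_space \<times> real) list \<Rightarrow> ('a \<times> real) list \<Rightarrow> 'a set" where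
  "lin_sys_set eqs ineqs =
     {x. (\<forall>(a, \<beta>) \<in> set eqs. a \<bullet> x = \<beta>) \<and> (\<forall>(c, \<delta>) \<in> set ineqs. c \<bullet> x \<le> \<delta>)}"

definition minimal_description ::
  "'a::euclidean_space set \<Rightarrow> ('a \<times> real) list \<Rightarrow> ('a \<times> real) list \<Rightarrow> bool" where
  "minimal_description P eqs ineqs \<longleftrightarrow>
     P = lin_sys_set eqs ineqs \<and>
     (\<forall>(c, \<delta>) \<in> set ineqs. {x \<in> P. c \<bullet> x = \<delta>} facet_of P)"

definition ineq_supp :: "('a::euclidean_space \<times> real) list \<Rightarrow> 'a \<Rightarrow> nat set" where
  "ineq_supp ineqs g = {i. i < length ineqs \<and> fst (ineqs ! i) \<bullet> g \<noteq> 0}"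

definition in_kernel :: "('a::euclidean_space \<times> real) list \<Rightarrow> 'a \<Rightarrow> bool" where
  "in_kernel eqs g \<longleftrightarrow> (\<forall>(a, \<beta>) \<in> set eqs. a \<bullet> g = 0)"

definition is_circuit ::
  "('a::euclidean_space \<times> real) list \<Rightarrow> ('a \<times> real) list \<Rightarrow> 'a \<Rightarrow> bool" where
  "is_circuit eqs ineqs g \<longleftrightarrow>
     g \<noteq> 0 \<and> in_kernel eqs g \<and>
     \<not> (\<exists>y. y \<noteq> 0 \<and> in_kernel eqs y \<and> ineq_supp ineqs y \<subset> ineq_supp ineqs g)"

definition circuit_step ::
  "('a::euclidean_space \<times> real) list \<Rightarrow> ('a \<times> real) list \<Rightarrow> 'a \<Rightarrow> 'a \<Rightarrow> bool" where
  "circuit_step eqs ineqs x' x'' \<longleftrightarrow>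
     (let P = lin_sys_set eqs ineqs in
      x' \<in> P \<and> x'' \<in> P \<and>
      (\<exists>c \<alpha>. is_circuit eqs ineqs c \<and> \<alpha> > 0 \<and> x'' = x' + \<alpha> *\<^sub>R c \<and>
             (\<forall>\<beta>>\<alpha>. x' + \<beta> *\<^sub>R c \<notin> P)))"

definition circuit_walk ::
  "('a::euclidean_space \<times> real) list \<Rightarrow> ('a \<times> real) list \<Rightarrow> 'a \<Rightarrow> 'a \<Rightarrow> nat \<Rightarrow> bool" where
  "circuit_walk eqs ineqs u v l \<longleftrightarrow>
     (\<exists>z :: nat \<Rightarrow> 'a. z 0 = u \<and> z l = v \<and>
        (\<forall>i\<le>l. z i \<in> lin_sys_set eqs ineqs) \<and>
        (\<forall>i<l. circuit_step eqs ineqs (z i) (z (Suc i))))"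

definition circuit_distance ::
  "('a::euclidean_space \<times> real) list \<Rightarrow> ('a \<times> real) list \<Rightarrow> 'a \<Rightarrow> 'a \<Rightarrow> nat" where
  "circuit_distance eqs ineqs u v = (LEAST l. circuit_walk eqs ineqs u v l)"

definition circuit_diameter ::
  "('a::euclidean_space \<times> real) list \<Rightarrow> ('a \<times> real) list \<Rightarrow> nat" where
  "circuit_diameter eqs ineqs =
     (let P = lin_sys_set eqs ineqs in
      Max {circuit_distance eqs ineqs u v | u v. u extreme_point_of P \<and> v extreme_point_of P})"

end

(*
  The degree equations cut out the 9-dimensional affine hull of P_TSP6, and for a minimal
  description every direction in the kernel of the equation system respects them. Each facet of
  P_TSP6 appears, modulo the degree equations, as an inequality of the system: the centroid of its
  vertices is tight for some row, and that row is then tight on the whole facet. Consequently, if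
  eight facets vanish on g = chi T2 - chi T1 and their normals cut the degree kernel down to the
  line through g, any direction with smaller inequality support is annihilated by the same eight
  normals, hence is a multiple of g: so g is a circuit and the two vertices are one circuit step
  apart. Up to relabelling the nodes, a pair of distinct Hamiltonian cycles of K6 is one of eleven
  representatives; for each, the eight facets (relabelled nonnegativity, subtour and comb
  inequalities) come with exact integer certificates that are checked by evaluation.
*)

theory Submission
  imports Defs "HOL-Combinatorics.Multiset_Permutations"
begin

section \<open>Circuit walks between vertices\<close>

lemma lin_sys_set_move_inward:
  fixes p w :: "'a::euclidean_space"
  assumes p: "p \<in> lin_sys_set eqs ineqs" and w: "in_kernel eqs w"
    and strict: "\<forall>(c, \<delta>)\<in>set ineqs. c \<bullet> p < \<delta>"
  obtains \<epsilon> where "\<epsilon> > 0" "p + \<epsilon> *\<^sub>R w \<in> lin_sys_set eqs ineqs"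
proof -
  define S where "S = insert 1 ((\<lambda>(c, \<delta>). (\<delta> - c \<bullet> p) / (\<bar>c \<bullet> w\<bar> + 1)) ` set ineqs)"
  define \<epsilon> where "\<epsilon> = Min S"
  have fS: "finite S" "S \<noteq> {}" unfolding S_def by auto
  have "\<forall>s\<in>S. s > 0" unfolding S_def using strict by (auto intro!: divide_pos_pos)
  hence \<epsilon>_pos: "\<epsilon> > 0" unfolding \<epsilon>_def using fS by simp
  have "c \<bullet> (p + \<epsilon> *\<^sub>R w) \<le> \<delta>" if cd: "(c, \<delta>) \<in> set ineqs" for c \<delta>
  proof -
    have "\<epsilon> \<le> (\<delta> - c \<bullet> p) / (\<bar>c \<bullet> w\<bar> + 1)"
      unfolding \<epsilon>_def using fS cd by (intro Min_le) (auto simp: S_def)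
    hence "\<epsilon> * \<bar>c \<bullet> w\<bar> + \<epsilon> \<le> \<delta> - c \<bullet> p"
      by (simp add: le_divide_eq add_pos_nonneg algebra_simps)
    moreover have "\<epsilon> * (c \<bullet> w) \<le> \<epsilon> * \<bar>c \<bullet> w\<bar>" using \<epsilon>_pos by (intro mult_left_mono) auto
    ultimately have "c \<bullet> p + \<epsilon> * (c \<bullet> w) \<le> \<delta>" using \<epsilon>_pos by linarith
    thus ?thesis by (simp add: inner_add_right)
  qed
  moreover have "a \<bullet> (p + \<epsilon> *\<^sub>R w) = \<beta>" if "(a, \<beta>) \<in> set eqs" for a \<beta>
  proof -
    have "a \<bullet> p = \<beta>" "a \<bullet> w = 0" using p w that unfolding lin_sys_set_def in_kernel_def by auto
    thus ?thesis by (simp add: inner_add_right)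
  qed
  ultimately have "p + \<epsilon> *\<^sub>R w \<in> lin_sys_set eqs ineqs" unfolding lin_sys_set_def by auto
  with \<epsilon>_pos show thesis by (rule that)
qed

lemma circuit_step_extreme_points:
  assumes u: "u extreme_point_of lin_sys_set eqs ineqs" and v: "v extreme_point_of lin_sys_set eqs ineqs"
    and uv: "u \<noteq> v" and circ: "is_circuit eqs ineqs (v - u)"
  shows "circuit_step eqs ineqs u v"
proof -
  let ?P = "lin_sys_set eqs ineqs"
  have uP: "u \<in> ?P" "v \<in> ?P" using u v unfolding extreme_point_of_def by auto
  have "u + \<beta> *\<^sub>R (v - u) \<notin> ?P" if b: "\<beta> > 1" for \<beta> :: real
  proof
    define w where "w = u + \<beta> *\<^sub>R (v - u)"
    assume "u + \<beta> *\<^sub>R (v - u) \<in> ?P"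
    hence wP: "w \<in> ?P" unfolding w_def .
    have "v = (1 - 1 / \<beta>) *\<^sub>R u + (1 / \<beta>) *\<^sub>R w"
      using b unfolding w_def by (simp add: algebra_simps)
    moreover have "u \<noteq> w" using b uv unfolding w_def by auto
    ultimately have "v \<in> open_segment u w" unfolding in_segment(2) using b
      by (intro conjI exI[of _ "1 / \<beta>"]) auto
    thus False using v uP wP unfolding extreme_point_of_def by blast
  qed
  thus ?thesis unfolding circuit_step_def Let_def
    using uP circ by (intro conjI exI[of _ "v - u"] exI[of _ "1::real"]) auto
qed

lemma circuit_distance_extreme_points:
  assumes u: "u extreme_point_of lin_sys_set eqs ineqs" and v: "v extreme_point_of lin_sys_set eqs ineqs"
    and circ: "u \<noteq> v \<Longrightarrow> is_circuit eqs ineqs (v - u)"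
  shows "circuit_distance eqs ineqs u v = (if u = v then 0 else 1)"
proof -
  have uP: "u \<in> lin_sys_set eqs ineqs" "v \<in> lin_sys_set eqs ineqs"
    using u v unfolding extreme_point_of_def by auto
  show ?thesis
  proof (cases "u = v")
    case True
    have "circuit_walk eqs ineqs u v 0" unfolding circuit_walk_def using True uP
      by (intro exI[of _ "\<lambda>_. u"]) auto
    thus ?thesis using True unfolding circuit_distance_def by simp
  next
    case False
    have "circuit_walk eqs ineqs u v 1" unfolding circuit_walk_def
      using uP circuit_step_extreme_points[OF u v False circ[OF False]]
      by (intro exI[of _ "\<lambda>i. if i = 0 then u else v"]) (auto simp: le_Suc_eq)
    moreover have "\<not> circuit_walk eqs ineqs u v 0" unfolding circuit_walk_def using False by auto
    ultimately have "(LEAST l. circuit_walk eqs ineqs u v l) = 1"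
      by (intro Least_equality) (auto simp: Suc_le_eq intro: gr0I)
    thus ?thesis using False unfolding circuit_distance_def by simp
  qed
qed

lemma circuit_diameter_eq_1I:
  assumes circ: "\<And>u v. u extreme_point_of lin_sys_set eqs ineqs \<Longrightarrow> v extreme_point_of lin_sys_set eqs ineqs
      \<Longrightarrow> u \<noteq> v \<Longrightarrow> is_circuit eqs ineqs (v - u)"
    and u: "u extreme_point_of lin_sys_set eqs ineqs" and v: "v extreme_point_of lin_sys_set eqs ineqs"
    and uv: "u \<noteq> v"
  shows "circuit_diameter eqs ineqs = 1"
proof -
  let ?P = "lin_sys_set eqs ineqs"
  let ?D = "{circuit_distance eqs ineqs u v | u v. u extreme_point_of ?P \<and> v extreme_point_of ?P}"
  have D01: "?D \<subseteq> {0, 1}" using circuit_distance_extreme_points[OF _ _ circ] by auto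
  have "Max ?D = 1"
  proof (rule Max_eqI)
    show "finite ?D" using D01 by (rule finite_subset) simp
    show "y \<le> 1" if "y \<in> ?D" for y using subsetD[OF D01 that] by auto
    show "1 \<in> ?D" using circuit_distance_extreme_points[OF u v circ] u v uv by force
  qed
  thus ?thesis unfolding circuit_diameter_def Let_def .
qed

section \<open>Minimal linear descriptions of polytopes\<close>

definition centroid :: "'a set \<Rightarrow> 'a::real_vector" where
  "centroid A = (1 / real (card A)) *\<^sub>R (\<Sum>x\<in>A. x)"

lemma inner_centroid: "c \<bullet> centroid A = (\<Sum>x\<in>A. c \<bullet> x) / real (card A)"
  by (simp add: centroid_def inner_sum_right)

lemma centroid_in_convex_hull:
  assumes "finite A" "A \<noteq> {}" "A \<subseteq> S"
  shows "centroid A \<in> convex hull S"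
proof -
  have "(\<Sum>x\<in>A. (1 / real (card A)) *\<^sub>R x) \<in> convex hull S"
    by (rule convex_sum) (use assms in \<open>auto intro!: hull_inc simp: card_gt_0_iff\<close>)
  thus ?thesis by (simp add: centroid_def scaleR_sum_right)
qed

lemma inner_centroid_eq_imp_all_eq:
  assumes "finite A" "A \<noteq> {}" "\<forall>x\<in>A. c \<bullet> x \<le> \<delta>" "c \<bullet> centroid A = \<delta>"
  shows "\<forall>x\<in>A. c \<bullet> x = \<delta>"
proof -
  have "(\<Sum>x\<in>A. \<delta> - c \<bullet> x) = 0"
    using assms by (simp add: inner_centroid sum_subtractf card_gt_0_iff field_simps)
  thus ?thesis using assms(1,3) by (subst (asm) sum_nonneg_eq_0_iff) auto
qed

lemma inner_le_on_convex_hull: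
  "\<forall>x\<in>S. c \<bullet> x \<le> \<delta> \<Longrightarrow> y \<in> convex hull S \<Longrightarrow> c \<bullet> y \<le> \<delta>"
  using hull_minimal[of S "{x. c \<bullet> x \<le> \<delta>}" convex] convex_halfspace_le by blast

lemma inner_eq_on_convex_hull:
  "\<forall>x\<in>S. c \<bullet> x = \<delta> \<Longrightarrow> y \<in> convex hull S \<Longrightarrow> c \<bullet> y = \<delta>"
  using hull_minimal[of S "{x. c \<bullet> x = \<delta>}" convex] convex_hyperplane by blast

lemma minimal_description_row_not_implicit:
  assumes md: "minimal_description (convex hull S) eqs ineqs" and r: "(c, \<delta>) \<in> set ineqs"
  shows "\<exists>x\<in>S. c \<bullet> x \<noteq> \<delta>"
proof (rule ccontr)
  assume "\<not> ?thesis"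
  hence "{x \<in> convex hull S. c \<bullet> x = \<delta>} = convex hull S"
    using inner_eq_on_convex_hull[of S c \<delta>] by auto
  thus False using md r unfolding minimal_description_def by fastforce
qed

lemma minimal_description_centroid_interior:
  assumes md: "minimal_description (convex hull S) eqs ineqs" and S: "finite S" "S \<noteq> {}"
  shows "\<forall>(c, \<delta>)\<in>set ineqs. c \<bullet> centroid S < \<delta>"
proof (clarify)
  fix c \<delta> assume r: "(c, \<delta>) \<in> set ineqs"
  have P: "convex hull S = lin_sys_set eqs ineqs" using md unfolding minimal_description_def by simp
  have le: "\<forall>x\<in>S. c \<bullet> x \<le> \<delta>" using r P hull_inc[of _ S convex] unfolding lin_sys_set_def by fastforce
  show "c \<bullet> centroid S < \<delta>"
    using inner_centroid_eq_imp_all_eq[OF S le] minimal_description_row_not_implicit[OF md r]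
      inner_le_on_convex_hull[OF le centroid_in_convex_hull[OF S subset_refl]] by fastforce
qed

lemma minimal_description_in_kernel_orthogonal:
  assumes md: "minimal_description (convex hull S) eqs ineqs" and S: "finite S" "S \<noteq> {}"
    and y: "in_kernel eqs y" and a: "\<forall>x\<in>S. a \<bullet> x = b"
  shows "a \<bullet> y = 0"
proof -
  have P: "convex hull S = lin_sys_set eqs ineqs" using md unfolding minimal_description_def by simp
  have p: "centroid S \<in> lin_sys_set eqs ineqs" using centroid_in_convex_hull[OF S subset_refl] P by simp
  obtain \<epsilon> where \<epsilon>: "\<epsilon> > 0" "centroid S + \<epsilon> *\<^sub>R y \<in> convex hull S"
    using lin_sys_set_move_inward[OF p y minimal_description_centroid_interior[OF md S]] P by metis
  have "a \<bullet> (centroid S + \<epsilon> *\<^sub>R y) = b" "a \<bullet> centroid S = b"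
    using inner_eq_on_convex_hull[OF a] \<epsilon>(2) centroid_in_convex_hull[OF S subset_refl] by auto
  thus ?thesis using \<epsilon>(1) by (simp add: inner_add_right)
qed

lemma minimal_description_tight_row:
  assumes md: "minimal_description (convex hull S) eqs ineqs" and S: "finite S"
    and valid: "\<forall>x\<in>S. f \<bullet> x \<le> \<phi>" and tight: "x0 \<in> S" "f \<bullet> x0 = \<phi>"
    and loose: "x1 \<in> S" "f \<bullet> x1 < \<phi>"
  obtains c \<delta> where "(c, \<delta>) \<in> set ineqs" "\<forall>x\<in>S. f \<bullet> x = \<phi> \<longrightarrow> c \<bullet> x = \<delta>"
proof -
  define F where "F = {x\<in>S. f \<bullet> x = \<phi>}"
  have F: "finite F" "F \<noteq> {}" "F \<subseteq> S" unfolding F_def using S tight by auto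
  have P: "convex hull S = lin_sys_set eqs ineqs" using md unfolding minimal_description_def by simp
  have p: "centroid F \<in> lin_sys_set eqs ineqs" using centroid_in_convex_hull[OF F] P by simp
  have fp: "f \<bullet> centroid F = \<phi>" using F by (simp add: inner_centroid F_def card_gt_0_iff)
  have "\<exists>(c, \<delta>)\<in>set ineqs. c \<bullet> centroid F = \<delta>"
  proof (rule ccontr)
    assume "\<not> ?thesis"
    hence strict: "\<forall>(c, \<delta>)\<in>set ineqs. c \<bullet> centroid F < \<delta>" using p unfolding lin_sys_set_def by fastforce
    have "x1 \<in> lin_sys_set eqs ineqs" using loose(1) P hull_inc[of x1 S] by auto
    hence "in_kernel eqs (centroid F - x1)"
      using p unfolding in_kernel_def lin_sys_set_def by (auto simp: inner_diff_right)
    then obtain \<epsilon> where \<epsilon>: "\<epsilon> > 0" "centroid F + \<epsilon> *\<^sub>R (centroid F - x1) \<in> convex hull S"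
      using lin_sys_set_move_inward[OF p _ strict] P by metis
    have "f \<bullet> (centroid F + \<epsilon> *\<^sub>R (centroid F - x1)) \<le> \<phi>" by (rule inner_le_on_convex_hull[OF valid \<epsilon>(2)])
    moreover have "\<epsilon> * (\<phi> - f \<bullet> x1) > 0" using \<epsilon>(1) loose(2) by simp
    ultimately show False using fp by (simp add: inner_add_right inner_diff_right algebra_simps)
  qed
  then obtain c \<delta> where r: "(c, \<delta>) \<in> set ineqs" "c \<bullet> centroid F = \<delta>" by blast
  have "\<forall>x\<in>F. c \<bullet> x \<le> \<delta>" using r(1) F(3) P hull_inc[of _ S] unfolding lin_sys_set_def by fastforce
  hence "\<forall>x\<in>F. c \<bullet> x = \<delta>" using inner_centroid_eq_imp_all_eq[OF F(1,2) _ r(2)] by blast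
  thus thesis using that[OF r(1)] unfolding F_def by blast
qed

lemma two_extreme_points:
  fixes S :: "'a::euclidean_space set"
  assumes "compact S" "convex S" "x \<in> S" "y \<in> S" "x \<noteq> y"
  obtains u v where "u extreme_point_of S" "v extreme_point_of S" "u \<noteq> v"
proof -
  have "\<not> {u. u extreme_point_of S} \<subseteq> {a}" for a
  proof
    assume "{u. u extreme_point_of S} \<subseteq> {a}"
    hence "S \<subseteq> convex hull {a}" using Krein_Milman_Minkowski[OF assms(1,2)] hull_mono by metis
    thus False using assms(3-5) by auto
  qed
  thus thesis using that by blast
qed

section \<open>Edges, weights and Hamiltonian cycles of K6\<close>

definition edge :: "nat \<Rightarrow> nat \<Rightarrow> edge6" where "edge i j = Abs_edge6 {i, j}"

lemma Rep_edge6_edge: "i < 6 \<Longrightarrow> j < 6 \<Longrightarrow> i \<noteq> j \<Longrightarrow> Rep_edge6 (edge i j) = {i, j}"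
  unfolding edge_def by (rule Abs_edge6_inverse) blast

lemma edge_commute: "edge i j = edge j i"
  unfolding edge_def by (simp add: insert_commute)

lemma ex_edge_ordered: "\<exists>i j. i < j \<and> j < 6 \<and> e = edge i j"
proof -
  obtain i j where ij: "i < 6" "j < 6" "i \<noteq> j" "Rep_edge6 e = {i, j}"
    using Rep_edge6[of e] by blast
  have e: "e = edge i j" unfolding edge_def using ij(4) by (metis Rep_edge6_inverse)
  show ?thesis
  proof (cases "i < j")
    case True thus ?thesis using ij e by blast
  next
    case False thus ?thesis using ij e edge_commute by (metis linorder_neqE_nat)
  qed
qed

lemma edge_eq_iff: assumes "i < 6" "j < 6" "i \<noteq> j" "k < 6" "l < 6" "k \<noteq> l" shows
   "edge i j = edge k l \<longleftrightarrow> {i, j} = {k, l}"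
proof
  assume "edge i j = edge k l" thus "{i, j} = {k, l}" using Rep_edge6_edge[of i j] Rep_edge6_edge[of k l] assms by metis
qed (simp add: edge_def)

definition edge_list :: "(nat \<times> nat) list" where
  "edge_list = [(0,1),(0,2),(0,3),(0,4),(0,5),(1,2),(1,3),(1,4),(1,5),(2,3),(2,4),(2,5),(3,4),(3,5),(4,5)]"

lemma length_edge_list: "length edge_list = 15" by (simp add: edge_list_def)

lemma edge_list_ordered: "(i, j) \<in> set edge_list \<Longrightarrow> i < j \<and> j < 6"
  by (auto simp: edge_list_def)

lemma edge_list_complete: "i < j \<Longrightarrow> j < (6::nat) \<Longrightarrow> (i, j) \<in> set edge_list"
proof -
  assume a: "i < j" "j < 6"
  have "\<forall>j\<in>{..<6::nat}. \<forall>i\<in>{..<j}. (i, j) \<in> set edge_list" by code_simp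
  thus ?thesis using a by auto
qed

lemma distinct_edge_list: "distinct edge_list" by (simp add: edge_list_def)

definition edge_at :: "nat \<Rightarrow> edge6" where "edge_at k = edge (fst (edge_list ! k)) (snd (edge_list ! k))"

lemma edge_list_nth_ordered: "k < 15 \<Longrightarrow> fst (edge_list ! k) < snd (edge_list ! k) \<and> snd (edge_list ! k) < 6"
  using edge_list_ordered[of "fst (edge_list ! k)" "snd (edge_list ! k)"] nth_mem[of k edge_list] length_edge_list by auto

lemma bij_betw_edge_at: "bij_betw edge_at {..<15} UNIV"
proof (rule bij_betw_imageI)
  show "inj_on edge_at {..<15}"
  proof (rule inj_onI)
    fix k l assume k: "k \<in> {..<15}" and l: "l \<in> {..<15}" and e: "edge_at k = edge_at l"
    have vk: "fst (edge_list ! k) < snd (edge_list ! k)" "snd (edge_list ! k) < 6" using edge_list_nth_ordered k by auto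
    have vl: "fst (edge_list ! l) < snd (edge_list ! l)" "snd (edge_list ! l) < 6" using edge_list_nth_ordered l by auto
    have "{fst (edge_list ! k), snd (edge_list ! k)} = {fst (edge_list ! l), snd (edge_list ! l)}"
      using e vk vl unfolding edge_at_def by (subst edge_eq_iff[symmetric]) auto
    hence "edge_list ! k = edge_list ! l" using vk vl by (auto simp: doubleton_eq_iff prod_eq_iff)
    thus "k = l" using distinct_edge_list k l length_edge_list by (simp add: nth_eq_iff_index_eq)
  qed
  show "edge_at ` {..<15} = UNIV"
  proof (rule set_eqI, rule iffI)
    fix e :: edge6
    obtain i j where ij: "i < j" "j < 6" "e = edge i j" using ex_edge_ordered by blast
    then obtain k where "k < length edge_list" "edge_list ! k = (i, j)" using edge_list_complete[of i j]
      by (metis in_set_conv_nth)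
    thus "e \<in> edge_at ` {..<15}" using ij length_edge_list unfolding edge_at_def by force
  qed auto
qed

lemma sum_edge6_edge_at: "(\<Sum>e\<in>UNIV. h e) = (\<Sum>k<15. h (edge_at k))"
  using sum.reindex_bij_betw[OF bij_betw_edge_at, of h] by simp

lemma inner_edge_at: "(x::real^edge6) \<bullet> y = (\<Sum>k<15. x $ edge_at k * y $ edge_at k)"
  unfolding inner_vec_def by (simp add: sum_edge6_edge_at)

lemma vec_eq_edge_atI: "(\<And>k. k < 15 \<Longrightarrow> (x::real^edge6) $ edge_at k = y $ edge_at k) \<Longrightarrow> x = y"
proof (rule vec_eq_iff[THEN iffD2], rule allI)
  fix e :: edge6 assume h: "\<And>k. k < 15 \<Longrightarrow> x $ edge_at k = y $ edge_at k"
  obtain k where "k < 15" "e = edge_at k" using bij_betw_edge_at by (metis UNIV_I bij_betw_iff_bijections lessThan_iff)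
  thus "x $ e = y $ e" using h by simp
qed

lemma Suc_mod_6: "(l::nat) < 6 \<Longrightarrow> Suc l mod 6 = (if l = 5 then 0 else Suc l)" by auto
lemma Suc_mod_6_not_sym: "(k::nat) < 6 \<Longrightarrow> l < 6 \<Longrightarrow> k = (l + 1) mod 6 \<Longrightarrow> (k + 1) mod 6 = l \<Longrightarrow> False"
  by (simp add: Suc_mod_6 split: if_splits)

lemma less_6_cases: "(k::nat) < 6 \<Longrightarrow> k = 0 \<or> k = 1 \<or> k = 2 \<or> k = 3 \<or> k = 4 \<or> k = 5" by auto

definition sym_weight :: "(nat \<Rightarrow> nat \<Rightarrow> int) \<Rightarrow> bool" where "sym_weight F \<longleftrightarrow> (\<forall>i j. F i j = F j i)"

definition weight_vec :: "(nat \<Rightarrow> nat \<Rightarrow> int) \<Rightarrow> real ^ edge6" where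
  "weight_vec F = (\<chi> e. of_int (F (Min (Rep_edge6 e)) (Max (Rep_edge6 e))))"

lemma weight_vec_edge: "i < j \<Longrightarrow> j < 6 \<Longrightarrow> weight_vec F $ edge i j = of_int (F i j)"
  by (simp add: weight_vec_def Rep_edge6_edge)

lemma weight_vec_edge_sym: assumes "sym_weight F" "i < 6" "j < 6" "i \<noteq> j" shows "weight_vec F $ edge i j = of_int (F i j)"
proof (cases "i < j")
  case True thus ?thesis using weight_vec_edge[of i j F] \<open>j < 6\<close> by simp
next
  case False
  hence "j < i" using \<open>i \<noteq> j\<close> by simp
  hence "weight_vec F $ edge j i = of_int (F j i)" using weight_vec_edge[of j i F] \<open>i < 6\<close> by simp
  thus ?thesis using \<open>sym_weight F\<close> edge_commute[of i j] unfolding sym_weight_def by simp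
qed

lemma weight_vec_edge_at: "k < 15 \<Longrightarrow> weight_vec F $ edge_at k = of_int (F (fst (edge_list ! k)) (snd (edge_list ! k)))"
  using edge_list_nth_ordered[of k] by (simp add: edge_at_def weight_vec_edge)

definition int_form :: "int list \<Rightarrow> real ^ edge6 \<Rightarrow> real" where
  "int_form c x = (\<Sum>k<15. of_int (c ! k) * x $ edge_at k)"

definition weight_coeffs :: "(nat \<Rightarrow> nat \<Rightarrow> int) \<Rightarrow> int list" where
  "weight_coeffs F = map (\<lambda>(i, j). F i j) edge_list"

lemma inner_weight_vec: "weight_vec F \<bullet> x = int_form (weight_coeffs F) x"
  unfolding inner_edge_at int_form_def weight_coeffs_def
  by (rule sum.cong) (auto simp: weight_vec_edge_at length_edge_list split: prod.splits)

definition cycle_edges :: "nat list \<Rightarrow> edge6 set" where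
  "cycle_edges vs = {e. \<exists>k<6. Rep_edge6 e = {vs ! k, vs ! ((k + 1) mod 6)}}"

definition node_orders :: "nat list set" where
  "node_orders = {vs. length vs = 6 \<and> distinct vs \<and> set vs = {..<6}}"

lemma ham_cycle6_iff: "ham_cycle6 T \<longleftrightarrow> (\<exists>vs\<in>node_orders. T = cycle_edges vs)"
  unfolding ham_cycle6_def node_orders_def cycle_edges_def by blast

definition cycle_adj :: "nat list \<Rightarrow> nat \<Rightarrow> nat \<Rightarrow> bool" where
  "cycle_adj vs i j = (\<exists>k\<in>set [0..<6]. (vs ! k = i \<and> vs ! ((k + 1) mod 6) = j) \<or> (vs ! k = j \<and> vs ! ((k + 1) mod 6) = i))"

lemma edge_in_cycle_edges_iff: "i < 6 \<Longrightarrow> j < 6 \<Longrightarrow> i \<noteq> j \<Longrightarrow> edge i j \<in> cycle_edges vs \<longleftrightarrow> cycle_adj vs i j"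
  by (auto simp: cycle_edges_def cycle_adj_def Rep_edge6_edge doubleton_eq_iff)

definition chi_coeffs :: "nat list \<Rightarrow> int list" where
  "chi_coeffs vs = map (\<lambda>(i, j). if cycle_adj vs i j then 1 else 0) edge_list"

lemma chi_cycle_edges_edge_at: "k < 15 \<Longrightarrow> chi (cycle_edges vs) $ edge_at k = of_int (chi_coeffs vs ! k)"
proof -
  assume k: "k < 15"
  have v: "fst (edge_list ! k) < snd (edge_list ! k)" "snd (edge_list ! k) < 6" using edge_list_nth_ordered[OF k] by auto
  show ?thesis using k v length_edge_list
    by (auto simp: chi_def chi_coeffs_def edge_at_def edge_in_cycle_edges_iff split: prod.splits)
qed

lemma node_orders_nth: "vs \<in> node_orders \<Longrightarrow> k < 6 \<Longrightarrow> vs ! k < 6"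
  unfolding node_orders_def using nth_mem by fastforce

lemma node_orders_nth_neq: assumes "vs \<in> node_orders" "k < 6" shows "vs ! k \<noteq> vs ! ((k + 1) mod 6)"
proof
  assume e: "vs ! k = vs ! ((k + 1) mod 6)"
  have d: "distinct vs" "length vs = 6" using assms(1) unfolding node_orders_def by auto
  have "(k + 1) mod 6 < length vs" using d by simp
  hence "k = (k + 1) mod 6" using nth_eq_iff_index_eq[OF d(1)] e assms(2) d(2) by simp
  thus False using assms(2) by (simp add: Suc_mod_6 split: if_splits)
qed

lemma cycle_edges_eq_image: assumes "vs \<in> node_orders"
  shows "cycle_edges vs = (\<lambda>k. edge (vs ! k) (vs ! ((k + 1) mod 6))) ` {..<6}"
proof (rule set_eqI)
  fix e
  show "e \<in> cycle_edges vs \<longleftrightarrow> e \<in> (\<lambda>k. edge (vs ! k) (vs ! ((k + 1) mod 6))) ` {..<6}"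
  proof
    assume "e \<in> cycle_edges vs"
    then obtain k where k: "k < 6" "Rep_edge6 e = {vs ! k, vs ! ((k + 1) mod 6)}" unfolding cycle_edges_def by blast
    hence "e = edge (vs ! k) (vs ! ((k + 1) mod 6))" unfolding edge_def by (metis Rep_edge6_inverse)
    thus "e \<in> (\<lambda>k. edge (vs ! k) (vs ! ((k + 1) mod 6))) ` {..<6}" using k by blast
  next
    assume "e \<in> (\<lambda>k. edge (vs ! k) (vs ! ((k + 1) mod 6))) ` {..<6}"
    then obtain k where k: "k < 6" "e = edge (vs ! k) (vs ! ((k + 1) mod 6))" by blast
    have "Rep_edge6 e = {vs ! k, vs ! ((k + 1) mod 6)}"
      using k node_orders_nth[OF assms] node_orders_nth_neq[OF assms] by (simp add: Rep_edge6_edge)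
    thus "e \<in> cycle_edges vs" using k unfolding cycle_edges_def by blast
  qed
qed

lemma inj_on_cycle_edge: assumes "vs \<in> node_orders"
  shows "inj_on (\<lambda>k. edge (vs ! k) (vs ! ((k + 1) mod 6))) {..<6}"
proof (rule inj_onI)
  fix k l assume k: "k \<in> {..<6}" and l: "l \<in> {..<6}"
    and e: "edge (vs ! k) (vs ! ((k + 1) mod 6)) = edge (vs ! l) (vs ! ((l + 1) mod 6))"
  have d: "distinct vs" "length vs = 6" using assms unfolding node_orders_def by auto
  have "{vs ! k, vs ! ((k + 1) mod 6)} = {vs ! l, vs ! ((l + 1) mod 6)}"
    using e k l node_orders_nth[OF assms] node_orders_nth_neq[OF assms]
    by (subst edge_eq_iff[symmetric]) auto
  hence "(vs ! k = vs ! l \<and> vs ! ((k + 1) mod 6) = vs ! ((l + 1) mod 6)) \<or>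
         (vs ! k = vs ! ((l + 1) mod 6) \<and> vs ! ((k + 1) mod 6) = vs ! l)"
    by (auto simp: doubleton_eq_iff)
  hence "k = l \<or> (k = (l + 1) mod 6 \<and> (k + 1) mod 6 = l)"
    using d k l by (auto simp: nth_eq_iff_index_eq)
  thus "k = l" using k l Suc_mod_6_not_sym[of k l] by auto
qed

definition cycle_weight :: "(nat \<Rightarrow> nat \<Rightarrow> int) \<Rightarrow> nat list \<Rightarrow> int" where
  "cycle_weight F vs = sum_list (map (\<lambda>k. F (vs ! k) (vs ! ((k + 1) mod 6))) [0..<6])"

lemma inner_weight_vec_chi: assumes "sym_weight F" "vs \<in> node_orders"
  shows "weight_vec F \<bullet> chi (cycle_edges vs) = of_int (cycle_weight F vs)"
proof -
  have "weight_vec F \<bullet> chi (cycle_edges vs) = (\<Sum>e\<in>UNIV. if e \<in> cycle_edges vs then weight_vec F $ e else 0)"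
    unfolding inner_vec_def chi_def by (intro sum.cong) auto
  also have "\<dots> = (\<Sum>e\<in>cycle_edges vs. weight_vec F $ e)"
    using sum.inter_restrict[of UNIV "\<lambda>e. weight_vec F $ e" "cycle_edges vs", symmetric] by simp
  also have "\<dots> = (\<Sum>k<6. weight_vec F $ edge (vs ! k) (vs ! ((k + 1) mod 6)))"
    unfolding cycle_edges_eq_image[OF assms(2)] sum.reindex[OF inj_on_cycle_edge[OF assms(2)]] by (simp only: o_def)
  also have "\<dots> = (\<Sum>k<6. of_int (F (vs ! k) (vs ! ((k + 1) mod 6))))"
  proof (rule sum.cong[OF refl])
    fix k assume "k \<in> {..<6::nat}"
    hence k: "k < 6" by simp
    show "weight_vec F $ edge (vs ! k) (vs ! ((k + 1) mod 6)) = of_int (F (vs ! k) (vs ! ((k + 1) mod 6)))"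
      by (rule weight_vec_edge_sym[OF assms(1) node_orders_nth[OF assms(2) k] node_orders_nth[OF assms(2)]
            node_orders_nth_neq[OF assms(2) k]]) simp
  qed
  also have "\<dots> = of_int (cycle_weight F vs)"
    unfolding cycle_weight_def interv_sum_list_conv_sum_set_nat of_int_sum set_upt atLeast0LessThan ..
  finally show ?thesis .
qed

lemma cycle_edges_rotate1: assumes "length vs = 6" shows "cycle_edges (rotate1 vs) = cycle_edges vs"
proof -
  have r: "k < 6 \<Longrightarrow> rotate1 vs ! k = vs ! ((k + 1) mod 6)" for k
    using assms by (simp add: nth_rotate1)
  show ?thesis
  proof (rule set_eqI)
    fix e
    show "e \<in> cycle_edges (rotate1 vs) \<longleftrightarrow> e \<in> cycle_edges vs"
    proof
      assume "e \<in> cycle_edges (rotate1 vs)"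
      then obtain k where k: "k < 6" "Rep_edge6 e = {rotate1 vs ! k, rotate1 vs ! ((k + 1) mod 6)}"
        unfolding cycle_edges_def by blast
      hence "Rep_edge6 e = {vs ! ((k + 1) mod 6), vs ! (((k + 1) mod 6 + 1) mod 6)}"
        using k r by simp
      moreover have "(k + 1) mod 6 < 6" by simp
      ultimately show "e \<in> cycle_edges vs" unfolding cycle_edges_def by blast
    next
      assume "e \<in> cycle_edges vs"
      then obtain k where k: "k < 6" "Rep_edge6 e = {vs ! k, vs ! ((k + 1) mod 6)}"
        unfolding cycle_edges_def by blast
      define k' where "k' = (k + 5) mod 6"
      have k'6: "k' < 6" unfolding k'_def by simp
      have "(k' + 1) mod 6 = k" "((k' + 1) mod 6 + 1) mod 6 = (k + 1) mod 6"
        unfolding k'_def using k(1) less_6_cases[of k] by auto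
      hence "Rep_edge6 e = {rotate1 vs ! k', rotate1 vs ! ((k' + 1) mod 6)}"
        using k r k'6 by simp
      thus "e \<in> cycle_edges (rotate1 vs)" unfolding cycle_edges_def using k'6 by blast
    qed
  qed
qed

lemma cycle_edges_rotate: assumes "length vs = 6" shows "cycle_edges (rotate m vs) = cycle_edges vs"
proof (induction m)
  case (Suc m)
  have "cycle_edges (rotate (Suc m) vs) = cycle_edges (rotate1 (rotate m vs))" by simp
  also have "\<dots> = cycle_edges (rotate m vs)" using assms by (intro cycle_edges_rotate1) simp
  finally show ?case using Suc by simp
qed simp

definition tails5 :: "nat list list" where "tails5 = permutations_of_list_impl [1,2,3,4,5]"

lemma tails5_node_orders: "t \<in> set tails5 \<Longrightarrow> 0 # t \<in> node_orders"
proof -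
  assume t: "t \<in> set tails5"
  have m: "mset t = mset [1,2,3,4,5::nat]" using t unfolding tails5_def set_permutations_of_list_impl
    by (simp add: permutations_of_multiset_def)
  have "set t = set [1,2,3,4,5::nat]" using mset_eq_setD[OF m] .
  moreover have "distinct t" using mset_eq_imp_distinct_iff[OF m] by simp
  ultimately have "set (0 # t) = {..<6}" "distinct (0 # t)" "length (0 # t) = 6"
    using distinct_card[of t] by (auto simp: lessThan_nat_numeral)
  thus ?thesis unfolding node_orders_def by blast
qed

lemma cycle_edges_canonical: assumes "vs \<in> node_orders" shows "\<exists>t\<in>set tails5. cycle_edges vs = cycle_edges (0 # t)"
proof -
  have vs: "length vs = 6" "distinct vs" "set vs = {..<6}" using assms unfolding node_orders_def by auto
  obtain m where m: "m < 6" "vs ! m = 0" using vs by (metis in_set_conv_nth lessThan_iff zero_less_numeral)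
  have rl: "length (rotate m vs) = 6" using vs by simp
  have r0: "rotate m vs ! 0 = 0" using vs m by (simp add: nth_rotate)
  obtain t where rt: "rotate m vs = 0 # t" using rl r0 by (cases "rotate m vs") auto
  have "distinct (0 # t)" "set (0 # t) = {..<6}" using vs rt[symmetric] by auto
  hence n0: "0 \<notin> set t" and dt: "distinct t" by simp_all
  have "set t = set (0 # t) - {0}" using n0 by simp
  hence st: "set t = {..<6} - {0}" using \<open>set (0 # t) = {..<6}\<close> by (simp only:)
  have "{..<6::nat} - {0} = set [1,2,3,4,5]" by (auto simp: lessThan_nat_numeral)
  hence "mset t = mset [1,2,3,4,5::nat]" using st dt set_eq_iff_mset_eq_distinct[of t "[1,2,3,4,5::nat]"] by simp
  hence "t \<in> set tails5" unfolding tails5_def set_permutations_of_list_impl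
    by (simp add: permutations_of_multiset_def)
  thus ?thesis using cycle_edges_rotate[OF vs(1), of m] rt by auto
qed

definition cycle0 :: "nat list" where "cycle0 = [0,1,2,3,4,5]"

lemma cycle0_node_orders: "cycle0 \<in> node_orders"
proof -
  have "[1,2,3,4,5] \<in> set tails5" unfolding tails5_def by code_simp
  thus ?thesis unfolding cycle0_def by (rule tails5_node_orders)
qed

lemma ham_cycle6_cycle0: "ham_cycle6 (cycle_edges cycle0)"
  using cycle0_node_orders ham_cycle6_iff by blast

section \<open>Node permutations\<close>

definition edge_map :: "(nat \<Rightarrow> nat) \<Rightarrow> edge6 \<Rightarrow> edge6" where
  "edge_map \<sigma> e = Abs_edge6 (\<sigma> ` Rep_edge6 e)"

lemma permutes6_less: "\<sigma> permutes {..<6} \<Longrightarrow> i < 6 \<Longrightarrow> \<sigma> i < (6::nat)"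
  using permutes_in_image by fastforce

lemma permutes6_neq: "\<sigma> permutes {..<6} \<Longrightarrow> i \<noteq> j \<Longrightarrow> \<sigma> i \<noteq> \<sigma> j"
  by (metis permutes_inverses(2))

lemma edge_map_edge: "\<sigma> permutes {..<6} \<Longrightarrow> i < 6 \<Longrightarrow> j < 6 \<Longrightarrow> i \<noteq> j \<Longrightarrow> edge_map \<sigma> (edge i j) = edge (\<sigma> i) (\<sigma> j)"
  unfolding edge_map_def by (simp add: Rep_edge6_edge, simp add: edge_def)

lemma edge_map_inv_right: assumes "\<sigma> permutes {..<6}" shows "edge_map \<sigma> (edge_map (inv \<sigma>) e) = e"
proof -
  obtain i j where ij: "i < j" "j < 6" "e = edge i j" using ex_edge_ordered by blast
  have s': "inv \<sigma> permutes {..<6}" using assms by (rule permutes_inv)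
  have "edge_map (inv \<sigma>) e = edge (inv \<sigma> i) (inv \<sigma> j)" using ij edge_map_edge[OF s'] by simp
  moreover have "inv \<sigma> i < 6" "inv \<sigma> j < 6" "inv \<sigma> i \<noteq> inv \<sigma> j"
    using ij permutes6_less[OF s'] permutes6_neq[OF s'] by auto
  ultimately show ?thesis using edge_map_edge[OF assms] ij permutes_inverses(1)[OF assms] by simp
qed

lemma edge_map_inv_left: assumes "\<sigma> permutes {..<6}" shows "edge_map (inv \<sigma>) (edge_map \<sigma> e) = e"
proof -
  have "edge_map (inv \<sigma>) (edge_map (inv (inv \<sigma>)) e) = e" using edge_map_inv_right permutes_inv[OF assms] by blast
  thus ?thesis using inv_inv_eq[OF permutes_bij[OF assms]] by simp
qed

definition vec_perm :: "(nat \<Rightarrow> nat) \<Rightarrow> real ^ edge6 \<Rightarrow> real ^ edge6" where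
  "vec_perm \<sigma> x = (\<chi> e. x $ edge_map \<sigma> e)"

lemma inner_vec_perm: assumes "\<sigma> permutes {..<6}" shows "vec_perm \<sigma> x \<bullet> vec_perm \<sigma> y = x \<bullet> y"
proof -
  have "vec_perm \<sigma> x \<bullet> vec_perm \<sigma> y = (\<Sum>e\<in>UNIV. x $ edge_map \<sigma> e * y $ edge_map \<sigma> e)"
    unfolding inner_vec_def vec_perm_def by simp
  also have "\<dots> = (\<Sum>e\<in>UNIV. x $ e * y $ e)"
    by (rule sum.reindex_bij_witness[of _ "edge_map (inv \<sigma>)" "edge_map \<sigma>"])
       (auto simp: edge_map_inv_right[OF assms] edge_map_inv_left[OF assms])
  finally show ?thesis unfolding inner_vec_def by simp
qed

lemma vec_perm_inv: "\<sigma> permutes {..<6} \<Longrightarrow> vec_perm \<sigma> (vec_perm (inv \<sigma>) x) = x"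
  by (simp add: vec_perm_def vec_eq_iff edge_map_inv_left)

lemma vec_perm_diff: "vec_perm \<sigma> (x - y) = vec_perm \<sigma> x - vec_perm \<sigma> y"
  by (simp add: vec_perm_def vec_eq_iff)

lemma vec_perm_scaleR: "vec_perm \<sigma> (c *\<^sub>R x) = c *\<^sub>R vec_perm \<sigma> x"
  by (simp add: vec_perm_def vec_eq_iff)

lemma linear_vec_perm: "linear (vec_perm \<sigma>)"
  by (rule linearI) (simp_all add: vec_perm_def vec_eq_iff)

lemma vec_perm_weight_vec: assumes "\<sigma> permutes {..<6}" "sym_weight F"
  shows "vec_perm \<sigma> (weight_vec F) = weight_vec (\<lambda>i j. F (\<sigma> i) (\<sigma> j))"
  unfolding vec_eq_iff
proof
  fix e obtain i j where ij: "i < j" "j < 6" "e = edge i j" using ex_edge_ordered by blast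
  have "vec_perm \<sigma> (weight_vec F) $ e = weight_vec F $ edge (\<sigma> i) (\<sigma> j)"
    using ij by (simp add: vec_perm_def edge_map_edge[OF assms(1)])
  also have "\<dots> = of_int (F (\<sigma> i) (\<sigma> j))"
    using ij by (intro weight_vec_edge_sym[OF assms(2)] permutes6_less[OF assms(1)] permutes6_neq[OF assms(1)]) auto
  finally show "vec_perm \<sigma> (weight_vec F) $ e = weight_vec (\<lambda>i j. F (\<sigma> i) (\<sigma> j)) $ e" using ij by (simp add: weight_vec_edge)
qed

lemma chi_image_edge_map: assumes "\<sigma> permutes {..<6}" shows "chi (edge_map \<sigma> ` T) = vec_perm (inv \<sigma>) (chi T)"
  unfolding vec_eq_iff
proof
  fix e
  have "e \<in> edge_map \<sigma> ` T \<longleftrightarrow> edge_map (inv \<sigma>) e \<in> T"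
    by (metis edge_map_inv_right[OF assms] edge_map_inv_left[OF assms] image_iff)
  thus "chi (edge_map \<sigma> ` T) $ e = vec_perm (inv \<sigma>) (chi T) $ e" by (simp add: chi_def vec_perm_def)
qed

lemma map_node_orders: assumes "\<sigma> permutes {..<6}" "vs \<in> node_orders" shows "map \<sigma> vs \<in> node_orders"
proof -
  have "inj_on \<sigma> (set vs)" using inj_on_subset[OF permutes_inj[OF assms(1)] subset_UNIV] .
  thus ?thesis using assms(2) permutes_image[OF assms(1)] unfolding node_orders_def by (auto simp: distinct_map)
qed

lemma cycle_edges_map:
  assumes "\<sigma> permutes {..<6}" "vs \<in> node_orders"
  shows "cycle_edges (map \<sigma> vs) = edge_map \<sigma> ` cycle_edges vs"
proof -
  have l: "length vs = 6" using assms(2) unfolding node_orders_def by simp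
  have "cycle_edges (map \<sigma> vs) = (\<lambda>k. edge (\<sigma> (vs ! k)) (\<sigma> (vs ! ((k + 1) mod 6)))) ` {..<6}"
    unfolding cycle_edges_eq_image[OF map_node_orders[OF assms]] using l by (intro image_cong) auto
  also have "\<dots> = edge_map \<sigma> ` (\<lambda>k. edge (vs ! k) (vs ! ((k + 1) mod 6))) ` {..<6}"
    unfolding image_image
    by (intro image_cong refl edge_map_edge[OF assms(1), symmetric] node_orders_nth[OF assms(2)]
        node_orders_nth_neq[OF assms(2)]) auto
  finally show ?thesis unfolding cycle_edges_eq_image[OF assms(2)] .
qed

lemma ham_cycle6_image_edge_map: assumes "\<sigma> permutes {..<6}" "ham_cycle6 T" shows "ham_cycle6 (edge_map \<sigma> ` T)"
  using assms cycle_edges_map map_node_orders unfolding ham_cycle6_iff by metis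

lemma image_edge_map_inv: "\<sigma> permutes {..<6} \<Longrightarrow> edge_map \<sigma> ` edge_map (inv \<sigma>) ` T = T"
  by (simp add: image_image edge_map_inv_right)

lemma vec_perm_chi: assumes "\<sigma> permutes {..<6}" shows "vec_perm \<sigma> (chi T) = chi (edge_map (inv \<sigma>) ` T)"
  using chi_image_edge_map[OF permutes_inv[OF assms], of T] inv_inv_eq[OF permutes_bij[OF assms]] by simp

section \<open>Facet normals and the degree kernel\<close>

definition degree_weight :: "nat \<Rightarrow> nat \<Rightarrow> nat \<Rightarrow> int" where
  "degree_weight v i j = (if i = v \<or> j = v then 1 else 0)"

lemma sym_degree_weight: "sym_weight (degree_weight v)" by (auto simp: sym_weight_def degree_weight_def)

definition degree_kernel :: "(real ^ edge6) set" where
  "degree_kernel = {x. \<forall>v<6. weight_vec (degree_weight v) \<bullet> x = 0}"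

lemma vec_perm_degree_kernel: assumes "\<sigma> permutes {..<6}" "x \<in> degree_kernel" shows "vec_perm \<sigma> x \<in> degree_kernel"
  unfolding degree_kernel_def
proof (intro CollectI allI impI)
  fix v :: nat assume v: "v < 6"
  have s': "inv \<sigma> permutes {..<6}" using assms(1) by (rule permutes_inv)
  have "weight_vec (degree_weight v) \<bullet> vec_perm \<sigma> x
      = vec_perm \<sigma> (vec_perm (inv \<sigma>) (weight_vec (degree_weight v))) \<bullet> vec_perm \<sigma> x"
    using vec_perm_inv[OF assms(1)] by simp
  also have "\<dots> = vec_perm (inv \<sigma>) (weight_vec (degree_weight v)) \<bullet> x" by (rule inner_vec_perm[OF assms(1)])
  also have "vec_perm (inv \<sigma>) (weight_vec (degree_weight v)) = weight_vec (\<lambda>i j. degree_weight v (inv \<sigma> i) (inv \<sigma> j))"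
    by (rule vec_perm_weight_vec[OF s' sym_degree_weight])
  also have "\<dots> = weight_vec (degree_weight (\<sigma> v))"
    unfolding degree_weight_def by (metis permutes_inverses[OF assms(1)])
  also have "weight_vec (degree_weight (\<sigma> v)) \<bullet> x = 0"
    using assms(2) permutes6_less[OF assms(1) v] unfolding degree_kernel_def by blast
  finally show "weight_vec (degree_weight v) \<bullet> vec_perm \<sigma> x = 0" .
qed

(* f x \<le> \<phi> is valid for P_TSP6 and its tight vertices span the hyperplane f x = \<phi> inside the
   affine hull, i.e. it defines a facet. *)
definition facet_normal :: "real ^ edge6 \<Rightarrow> real \<Rightarrow> bool" where
  "facet_normal f \<phi> \<longleftrightarrow> (\<forall>T. ham_cycle6 T \<longrightarrow> f \<bullet> chi T \<le> \<phi>) \<and> (\<exists>T. ham_cycle6 T \<and> f \<bullet> chi T < \<phi>) \<and>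
     (\<exists>T0. ham_cycle6 T0 \<and> f \<bullet> chi T0 = \<phi> \<and>
        (\<forall>x\<in>degree_kernel. f \<bullet> x = 0 \<longrightarrow> x \<in> span {chi T - chi T0 | T. ham_cycle6 T \<and> f \<bullet> chi T = \<phi>}))"

lemma facet_normal_vec_perm: assumes s: "\<sigma> permutes {..<6}" and g: "facet_normal f \<phi>" shows "facet_normal (vec_perm \<sigma> f) \<phi>"
proof -
  have s': "inv \<sigma> permutes {..<6}" using s by (rule permutes_inv)
  have key: "vec_perm \<sigma> f \<bullet> chi (edge_map (inv \<sigma>) ` T) = f \<bullet> chi T" for T
    using inner_vec_perm[OF s, of f "chi T"] vec_perm_chi[OF s, of T] by simp
  have hamI: "ham_cycle6 T \<Longrightarrow> ham_cycle6 (edge_map (inv \<sigma>) ` T)" for T by (rule ham_cycle6_image_edge_map[OF s'])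
  have c1: "\<forall>T. ham_cycle6 T \<longrightarrow> vec_perm \<sigma> f \<bullet> chi T \<le> \<phi>"
  proof (intro allI impI)
    fix T assume T: "ham_cycle6 T"
    have "T = edge_map (inv \<sigma>) ` (edge_map \<sigma> ` T)" using image_edge_map_inv[OF s', of "edge_map \<sigma> ` T"]
      inv_inv_eq[OF permutes_bij[OF s]] by (simp add: image_image edge_map_inv_left[OF s])
    hence "vec_perm \<sigma> f \<bullet> chi T = f \<bullet> chi (edge_map \<sigma> ` T)" using key by metis
    also have "\<dots> \<le> \<phi>" using g T ham_cycle6_image_edge_map[OF s T] unfolding facet_normal_def by blast
    finally show "vec_perm \<sigma> f \<bullet> chi T \<le> \<phi>" .
  qed
  obtain T1 where T1: "ham_cycle6 T1" "f \<bullet> chi T1 < \<phi>" using g unfolding facet_normal_def by blast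
  have c2: "\<exists>T. ham_cycle6 T \<and> vec_perm \<sigma> f \<bullet> chi T < \<phi>"
    using hamI[OF T1(1)] key[of T1] T1(2) by auto
  obtain T0 where T0: "ham_cycle6 T0" "f \<bullet> chi T0 = \<phi>"
    "\<forall>x\<in>degree_kernel. f \<bullet> x = 0 \<longrightarrow> x \<in> span {chi T - chi T0 | T. ham_cycle6 T \<and> f \<bullet> chi T = \<phi>}"
    using g unfolding facet_normal_def by blast
  define T0' where "T0' = edge_map (inv \<sigma>) ` T0"
  have c3: "\<forall>x\<in>degree_kernel. vec_perm \<sigma> f \<bullet> x = 0 \<longrightarrow>
     x \<in> span {chi T - chi T0' | T. ham_cycle6 T \<and> vec_perm \<sigma> f \<bullet> chi T = \<phi>}"
  proof (intro ballI impI)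
    fix x assume x: "x \<in> degree_kernel" "vec_perm \<sigma> f \<bullet> x = 0"
    define x' where "x' = vec_perm (inv \<sigma>) x"
    have x'D: "x' \<in> degree_kernel" unfolding x'_def by (rule vec_perm_degree_kernel[OF s' x(1)])
    have "f \<bullet> x' = vec_perm \<sigma> f \<bullet> vec_perm \<sigma> x'" by (rule inner_vec_perm[OF s, symmetric])
    also have "vec_perm \<sigma> x' = x" unfolding x'_def by (rule vec_perm_inv[OF s])
    finally have "f \<bullet> x' = 0" using x(2) by simp
    hence "x' \<in> span {chi T - chi T0 | T. ham_cycle6 T \<and> f \<bullet> chi T = \<phi>}" using T0(3) x'D by blast
    hence "vec_perm \<sigma> x' \<in> vec_perm \<sigma> ` span {chi T - chi T0 | T. ham_cycle6 T \<and> f \<bullet> chi T = \<phi>}" by blast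
    also have "\<dots> = span (vec_perm \<sigma> ` {chi T - chi T0 | T. ham_cycle6 T \<and> f \<bullet> chi T = \<phi>})"
      by (rule span_linear_image[OF linear_vec_perm, symmetric])
    also have "\<dots> \<subseteq> span {chi T - chi T0' | T. ham_cycle6 T \<and> vec_perm \<sigma> f \<bullet> chi T = \<phi>}"
    proof (rule span_mono, rule subsetI)
      fix z assume "z \<in> vec_perm \<sigma> ` {chi T - chi T0 | T. ham_cycle6 T \<and> f \<bullet> chi T = \<phi>}"
      then obtain T where T: "ham_cycle6 T" "f \<bullet> chi T = \<phi>" "z = vec_perm \<sigma> (chi T - chi T0)" by blast
      have "z = chi (edge_map (inv \<sigma>) ` T) - chi T0'"
        unfolding T(3) T0'_def vec_perm_diff vec_perm_chi[OF s] ..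
      moreover have "vec_perm \<sigma> f \<bullet> chi (edge_map (inv \<sigma>) ` T) = \<phi>" using key T(2) by simp
      ultimately show "z \<in> {chi T - chi T0' | T. ham_cycle6 T \<and> vec_perm \<sigma> f \<bullet> chi T = \<phi>}"
        using hamI[OF T(1)] by blast
    qed
    finally show "x \<in> span {chi T - chi T0' | T. ham_cycle6 T \<and> vec_perm \<sigma> f \<bullet> chi T = \<phi>}"
      using \<open>vec_perm \<sigma> x' = x\<close> by simp
  qed
  have "ham_cycle6 T0'" "vec_perm \<sigma> f \<bullet> chi T0' = \<phi>" using hamI[OF T0(1)] key T0(2) unfolding T0'_def by auto
  thus ?thesis unfolding facet_normal_def using c1 c2 c3 by blast
qed

definition facet_determined :: "real ^ edge6 \<Rightarrow> bool" where
  "facet_determined g \<longleftrightarrow> (\<exists>F. (\<forall>f\<in>F. (\<exists>\<phi>. facet_normal f \<phi>) \<and> f \<bullet> g = 0) \<and>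
     (\<forall>y\<in>degree_kernel. (\<forall>f\<in>F. f \<bullet> y = 0) \<longrightarrow> (\<exists>s. y = s *\<^sub>R g)))"

lemma facet_determined_vec_perm:
  assumes \<sigma>: "\<sigma> permutes {..<6}" and g: "facet_determined g"
  shows "facet_determined (vec_perm \<sigma> g)"
proof -
  obtain F where F: "\<forall>f\<in>F. (\<exists>\<phi>. facet_normal f \<phi>) \<and> f \<bullet> g = 0"
    and pin: "\<forall>y\<in>degree_kernel. (\<forall>f\<in>F. f \<bullet> y = 0) \<longrightarrow> (\<exists>s. y = s *\<^sub>R g)"
    using g unfolding facet_determined_def by blast
  have "\<exists>s. y = s *\<^sub>R vec_perm \<sigma> g"
    if y: "y \<in> degree_kernel" "\<forall>f\<in>vec_perm \<sigma> ` F. f \<bullet> y = 0" for y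
  proof -
    define y' where "y' = vec_perm (inv \<sigma>) y"
    have yy: "vec_perm \<sigma> y' = y" unfolding y'_def by (rule vec_perm_inv[OF \<sigma>])
    have "y' \<in> degree_kernel" unfolding y'_def by (rule vec_perm_degree_kernel[OF permutes_inv[OF \<sigma>] y(1)])
    moreover have "\<forall>f\<in>F. f \<bullet> y' = 0" using y(2) inner_vec_perm[OF \<sigma>, of _ y'] yy by auto
    ultimately obtain s where "y' = s *\<^sub>R g" using pin by blast
    hence "y = s *\<^sub>R vec_perm \<sigma> g" using yy vec_perm_scaleR by metis
    thus ?thesis by blast
  qed
  moreover have "(\<exists>\<phi>. facet_normal f \<phi>) \<and> f \<bullet> vec_perm \<sigma> g = 0" if fF: "f \<in> vec_perm \<sigma> ` F" for f
  proof -
    obtain f0 where f0: "f0 \<in> F" "f = vec_perm \<sigma> f0" using fF by blast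
    then obtain \<phi> where "facet_normal f0 \<phi>" "f0 \<bullet> g = 0" using F by blast
    thus ?thesis using facet_normal_vec_perm[OF \<sigma>] inner_vec_perm[OF \<sigma>] f0(2) by auto
  qed
  ultimately show ?thesis unfolding facet_determined_def by (intro exI[of _ "vec_perm \<sigma> ` F"]) blast
qed

lemma chi_in_P_TSP6: "ham_cycle6 T \<Longrightarrow> chi T \<in> P_TSP6"
  unfolding P_TSP6_def by (rule hull_inc) blast

lemma ham_cycle6_tails5_induct:
  assumes "\<forall>t\<in>set tails5. Q (cycle_edges (0 # t))" "ham_cycle6 T" shows "Q T"
proof -
  obtain vs where vs: "vs \<in> node_orders" "T = cycle_edges vs" using assms(2) ham_cycle6_iff by blast
  obtain t where "t \<in> set tails5" "cycle_edges vs = cycle_edges (0 # t)"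
    using cycle_edges_canonical[OF vs(1)] by blast
  thus ?thesis using assms(1) vs(2) by simp
qed

lemma degree_weight_check: "\<forall>t\<in>set tails5. \<forall>v\<in>set [0..<6]. cycle_weight (degree_weight v) (0 # t) = 2"
  unfolding tails5_def cycle_weight_def degree_weight_def by code_simp

lemma inner_degree_weight_chi:
  assumes "ham_cycle6 T" "v < 6" shows "weight_vec (degree_weight v) \<bullet> chi T = 2"
proof (rule ham_cycle6_tails5_induct[OF _ assms(1)], rule ballI)
  fix t assume t: "t \<in> set tails5"
  have "cycle_weight (degree_weight v) (0 # t) = 2" using degree_weight_check t assms(2) by simp
  thus "weight_vec (degree_weight v) \<bullet> chi (cycle_edges (0 # t)) = 2"
    using inner_weight_vec_chi[OF sym_degree_weight tails5_node_orders[OF t], of v] by simp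
qed

lemma chi_diff_degree_kernel: "ham_cycle6 T \<Longrightarrow> ham_cycle6 T' \<Longrightarrow> chi T - chi T' \<in> degree_kernel"
  unfolding degree_kernel_def by (simp add: inner_diff_right inner_degree_weight_chi)

lemma degree_kernel_diff_scaleR:
  "x \<in> degree_kernel \<Longrightarrow> y \<in> degree_kernel \<Longrightarrow> x - a *\<^sub>R y \<in> degree_kernel"
  unfolding degree_kernel_def by (simp add: inner_diff_right)

lemma in_kernel_degree_kernel:
  assumes md: "minimal_description P_TSP6 eqs ineqs" and y: "in_kernel eqs y"
  shows "y \<in> degree_kernel"
  unfolding degree_kernel_def
proof (intro CollectI allI impI)
  fix v :: nat assume "v < 6"
  hence "\<forall>x\<in>chi ` {T. ham_cycle6 T}. weight_vec (degree_weight v) \<bullet> x = 2"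
    using inner_degree_weight_chi by blast
  moreover have "chi ` {T. ham_cycle6 T} \<noteq> {}" using ham_cycle6_cycle0 by blast
  ultimately show "weight_vec (degree_weight v) \<bullet> y = 0"
    using minimal_description_in_kernel_orthogonal[OF md[unfolded P_TSP6_def] _ _ y] by simp
qed

lemma facet_normal_parallel_row:
  assumes md: "minimal_description P_TSP6 eqs ineqs" and f: "facet_normal f \<phi>"
  obtains c \<delta> where "(c, \<delta>) \<in> set ineqs"
    "\<forall>x\<in>degree_kernel. f \<bullet> x = 0 \<longrightarrow> c \<bullet> x = 0" "\<forall>y\<in>degree_kernel. c \<bullet> y = 0 \<longrightarrow> f \<bullet> y = 0"
proof -
  obtain T1 where T1: "ham_cycle6 T1" "f \<bullet> chi T1 < \<phi>" using f unfolding facet_normal_def by blast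
  obtain T0 where T0: "ham_cycle6 T0" "f \<bullet> chi T0 = \<phi>"
    and span: "\<forall>x\<in>degree_kernel. f \<bullet> x = 0 \<longrightarrow> x \<in> span {chi T - chi T0 | T. ham_cycle6 T \<and> f \<bullet> chi T = \<phi>}"
    using f unfolding facet_normal_def by blast
  have valid: "\<forall>x\<in>chi ` {T. ham_cycle6 T}. f \<bullet> x \<le> \<phi>" using f unfolding facet_normal_def by blast
  obtain c \<delta> where r: "(c, \<delta>) \<in> set ineqs"
    and tight: "\<forall>x\<in>chi ` {T. ham_cycle6 T}. f \<bullet> x = \<phi> \<longrightarrow> c \<bullet> x = \<delta>"
    by (rule minimal_description_tight_row[OF md[unfolded P_TSP6_def] _ valid _ T0(2) _ T1(2)])
      (use T0(1) T1(1) in auto)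
  have "{chi T - chi T0 | T. ham_cycle6 T \<and> f \<bullet> chi T = \<phi>} \<subseteq> {x. c \<bullet> x = 0}"
    using tight T0 by (auto simp: inner_diff_right)
  hence "span {chi T - chi T0 | T. ham_cycle6 T \<and> f \<bullet> chi T = \<phi>} \<subseteq> {x. c \<bullet> x = 0}"
    by (rule span_minimal) (rule subspace_hyperplane)
  hence par: "\<forall>x\<in>degree_kernel. f \<bullet> x = 0 \<longrightarrow> c \<bullet> x = 0" using span by blast
  have conv: "f \<bullet> y = 0" if y: "y \<in> degree_kernel" "c \<bullet> y = 0" for y
  proof (rule ccontr)
    assume fy: "f \<bullet> y \<noteq> 0"
    have "c \<bullet> chi T = \<delta>" if T: "ham_cycle6 T" for T
    proof -
      define d where "d = chi T - chi T0"
      define x where "x = d - ((f \<bullet> d) / (f \<bullet> y)) *\<^sub>R y"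
      have "x \<in> degree_kernel" unfolding x_def d_def
        by (rule degree_kernel_diff_scaleR[OF chi_diff_degree_kernel[OF T T0(1)] y(1)])
      moreover have "f \<bullet> x = 0" unfolding x_def using fy by (simp add: inner_diff_right)
      ultimately have "c \<bullet> x = 0" using par by blast
      hence "c \<bullet> d = 0" unfolding x_def using y(2) by (simp add: inner_diff_right)
      thus ?thesis unfolding d_def using tight T0 by (simp add: inner_diff_right)
    qed
    thus False using minimal_description_row_not_implicit[OF md[unfolded P_TSP6_def] r] by blast
  qed
  show thesis using that[OF r par] conv by blast
qed

lemma is_circuit_if_facet_determined:
  assumes md: "minimal_description P_TSP6 eqs ineqs" and T1: "ham_cycle6 T1" and T2: "ham_cycle6 T2"
    and g0: "chi T2 - chi T1 \<noteq> 0" and fd: "facet_determined (chi T2 - chi T1)"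
  shows "is_circuit eqs ineqs (chi T2 - chi T1)"
proof -
  define g where "g = chi T2 - chi T1"
  obtain F where F: "\<forall>f\<in>F. (\<exists>\<phi>. facet_normal f \<phi>) \<and> f \<bullet> g = 0"
    and pin: "\<forall>y\<in>degree_kernel. (\<forall>f\<in>F. f \<bullet> y = 0) \<longrightarrow> (\<exists>s. y = s *\<^sub>R g)"
    using fd unfolding facet_determined_def g_def by blast
  have "chi T1 \<in> lin_sys_set eqs ineqs" "chi T2 \<in> lin_sys_set eqs ineqs"
    using chi_in_P_TSP6[OF T1] chi_in_P_TSP6[OF T2] md unfolding minimal_description_def by auto
  hence gK: "in_kernel eqs g" unfolding g_def in_kernel_def lin_sys_set_def
    by (auto simp: inner_diff_right)
  have gD: "g \<in> degree_kernel" unfolding g_def by (rule chi_diff_degree_kernel[OF T2 T1])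
  have "\<not> ineq_supp ineqs y \<subset> ineq_supp ineqs g" if y: "y \<noteq> 0" "in_kernel eqs y" for y
  proof
    assume sub: "ineq_supp ineqs y \<subset> ineq_supp ineqs g"
    have yD: "y \<in> degree_kernel" by (rule in_kernel_degree_kernel[OF md y(2)])
    have "f \<bullet> y = 0" if fF: "f \<in> F" for f
    proof -
      obtain \<phi> where f\<phi>: "facet_normal f \<phi>" and fg: "f \<bullet> g = 0" using F fF by blast
      obtain c \<delta> where r: "(c, \<delta>) \<in> set ineqs"
        and par: "\<forall>x\<in>degree_kernel. f \<bullet> x = 0 \<longrightarrow> c \<bullet> x = 0" "\<forall>y\<in>degree_kernel. c \<bullet> y = 0 \<longrightarrow> f \<bullet> y = 0"
        by (rule facet_normal_parallel_row[OF md f\<phi>])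
      obtain i where i: "i < length ineqs" "ineqs ! i = (c, \<delta>)" using r by (metis in_set_conv_nth)
      have "i \<notin> ineq_supp ineqs g" using par(1) gD fg i unfolding ineq_supp_def by simp
      hence "i \<notin> ineq_supp ineqs y" using sub by blast
      thus ?thesis using par(2) yD i unfolding ineq_supp_def by simp
    qed
    then obtain s where s: "y = s *\<^sub>R g" using pin yD by blast
    hence "ineq_supp ineqs y = ineq_supp ineqs g" using y(1) unfolding ineq_supp_def by auto
    thus False using sub by simp
  qed
  thus ?thesis unfolding is_circuit_def using g0 gK unfolding g_def by blast
qed

section \<open>Integer certificates\<close>

definition int_sum :: "(nat \<Rightarrow> int) \<Rightarrow> nat \<Rightarrow> int" where
  "int_sum f n = sum_list (map f [0..<n])"

lemma int_sum_eq: "int_sum f n = (\<Sum>k<n. f k)"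
  unfolding int_sum_def interv_sum_list_conv_sum_set_nat set_upt atLeast0LessThan ..

(* The matrix identity d I = (\<Sum>k. b\<^sub>k a\<^sub>k\<^sup>T) + \<Lambda> R for tg = [(a\<^sub>k, b\<^sub>k)] and rows R: on the kernel of R,
   d x = \<Sum>k. (a\<^sub>k \<bullet> x) b\<^sub>k. *)
definition lin_cert :: "int list list \<Rightarrow> (int list \<times> int list) list \<Rightarrow> int \<Rightarrow> int list list \<Rightarrow> bool" where
  "lin_cert rws tg d lam \<longleftrightarrow> d \<noteq> 0 \<and>
     list_all (\<lambda>e. list_all (\<lambda>e'. d * (if e' = e then 1 else 0) - int_sum (\<lambda>k. snd (tg ! k) ! e * fst (tg ! k) ! e') (length tg)
        = int_sum (\<lambda>j. lam ! e ! j * rws ! j ! e') (length rws)) [0..<15]) [0..<15]"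

lemma lin_cert_sound:
  assumes c: "lin_cert rws tg d lam" and r: "\<forall>j<length rws. int_form (rws ! j) x = 0" and e: "e < 15"
  shows "of_int d * x $ edge_at e = (\<Sum>k<length tg. of_int (snd (tg ! k) ! e) * int_form (fst (tg ! k)) x)"
proof -
  define X where "X e' = x $ edge_at e'" for e'
  define M where "M e' = d * (if e' = e then 1 else 0) - (\<Sum>k<length tg. snd (tg ! k) ! e * fst (tg ! k) ! e')" for e'
  have "M e' = (\<Sum>j<length rws. lam ! e ! j * rws ! j ! e')" if "e' < 15" for e'
    using c e that unfolding lin_cert_def list_all_iff int_sum_eq M_def by auto
  hence "(\<Sum>e'<15. of_int (M e') * X e') = (\<Sum>e'<15. of_int (\<Sum>j<length rws. lam ! e ! j * rws ! j ! e') * X e')"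
    by (intro sum.cong) auto
  also have "\<dots> = (\<Sum>j<length rws. of_int (lam ! e ! j) * int_form (rws ! j) x)"
    unfolding int_form_def X_def
    by (simp add: sum_distrib_left sum_distrib_right mult.assoc sum.swap[of _ "{..<15}"])
  also have "\<dots> = 0" using r by simp
  finally have "(\<Sum>e'<15. of_int (M e') * X e') = 0" .
  moreover have "of_int (M e') * X e' = of_int d * (if e' = e then X e' else 0)
      - (\<Sum>k<length tg. of_int (snd (tg ! k) ! e) * (of_int (fst (tg ! k) ! e') * X e'))" for e'
    unfolding M_def by (cases "e' = e") (simp_all add: algebra_simps sum_distrib_right sum_distrib_left)
  hence "(\<Sum>e'<15. of_int (M e') * X e') = (\<Sum>e'<15. of_int d * (if e' = e then X e' else 0))
      - (\<Sum>e'<15. \<Sum>k<length tg. of_int (snd (tg ! k) ! e) * (of_int (fst (tg ! k) ! e') * X e'))"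
    by (simp add: sum_subtractf)
  also have "(\<Sum>e'<15. of_int d * (if e' = e then X e' else 0)) = of_int d * X e"
    using e by (simp add: sum_distrib_left[symmetric] if_distrib sum.delta cong: if_cong)
  also have "(\<Sum>e'<15. \<Sum>k<length tg. of_int (snd (tg ! k) ! e) * (of_int (fst (tg ! k) ! e') * X e'))
      = (\<Sum>k<length tg. of_int (snd (tg ! k) ! e) * int_form (fst (tg ! k)) x)"
    unfolding int_form_def X_def by (simp add: sum_distrib_left sum.swap[of _ "{..<15}"])
  ultimately show ?thesis unfolding X_def by simp
qed

lemma lin_cert_solution:
  assumes c: "lin_cert rws (zip as bs) d lam" and len: "length as = length bs"
    and r: "\<forall>j<length rws. int_form (rws ! j) x = 0"
    and w: "\<And>i e. i < length bs \<Longrightarrow> e < 15 \<Longrightarrow> w i $ edge_at e = of_int (bs ! i ! e)"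
  shows "x = (\<Sum>i<length bs. (int_form (as ! i) x / of_int d) *\<^sub>R w i)"
proof (rule vec_eq_edge_atI)
  fix e :: nat assume e: "e < 15"
  have "of_int d * x $ edge_at e = (\<Sum>i<length bs. w i $ edge_at e * int_form (as ! i) x)"
    using lin_cert_sound[OF c r e] len w[OF _ e] by simp
  moreover have "d \<noteq> 0" using c unfolding lin_cert_def by simp
  ultimately show "x $ edge_at e = (\<Sum>i<length bs. (int_form (as ! i) x / of_int d) *\<^sub>R w i) $ edge_at e"
    by (simp add: sum_divide_distrib[symmetric] field_simps)
qed

definition nonneg_weight :: "nat \<Rightarrow> nat \<Rightarrow> int" where
  "nonneg_weight i j = (if (i = 0 \<and> j = 1) \<or> (i = 1 \<and> j = 0) then -1 else 0)"
definition subtour_weight :: "nat \<Rightarrow> nat \<Rightarrow> int" where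
  "subtour_weight i j = (if i < 3 \<and> j < 3 \<and> i \<noteq> j then 1 else 0)"
definition comb_weight :: "nat \<Rightarrow> nat \<Rightarrow> int" where
  "comb_weight i j = subtour_weight i j + (if (i, j) \<in> set [(0,3),(3,0),(1,4),(4,1),(2,5),(5,2)] then 1 else 0)"
definition facet_weight :: "nat \<Rightarrow> nat \<Rightarrow> nat \<Rightarrow> int" where
  "facet_weight k = (if k = 0 then nonneg_weight else if k = 1 then subtour_weight else comb_weight)"
definition facet_rhs :: "nat \<Rightarrow> int" where
  "facet_rhs k = (if k = 0 then 0 else if k = 1 then 2 else 4)"

lemma sym_facet_weight: "sym_weight (facet_weight k)"
  unfolding sym_weight_def facet_weight_def nonneg_weight_def subtour_weight_def comb_weight_def by auto

definition degree_rows :: "int list list" where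
  "degree_rows = map (\<lambda>v. weight_coeffs (degree_weight v)) [0..<6]"

lemma int_form_degree_rows: "x \<in> degree_kernel \<Longrightarrow> \<forall>j<length degree_rows. int_form (degree_rows ! j) x = 0"
  unfolding degree_rows_def degree_kernel_def by (simp add: inner_weight_vec[symmetric])

definition int_diff :: "int list \<Rightarrow> int list \<Rightarrow> int list" where
  "int_diff a b = map (\<lambda>(x, y). x - y) (zip a b)"

lemma length_chi_coeffs: "length (chi_coeffs vs) = 15" by (simp add: chi_coeffs_def length_edge_list)

lemma int_diff_nth: "length a = 15 \<Longrightarrow> length b = 15 \<Longrightarrow> e < 15 \<Longrightarrow> int_diff a b ! e = a ! e - b ! e"
  by (simp add: int_diff_def)

(* t0 and the tours ts are tight, tn is not; the tight differences chi ts - chi t0 span the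
   hyperplane inside the degree kernel. *)
definition facet_cert :: "nat \<Rightarrow> nat list \<Rightarrow> nat list \<Rightarrow> nat list list \<Rightarrow> int list list \<Rightarrow> int \<Rightarrow> int list list \<Rightarrow> bool" where
  "facet_cert k t0 tn ts as d lam \<longleftrightarrow>
     list_all (\<lambda>t. cycle_weight (facet_weight k) (0 # t) \<le> facet_rhs k) tails5 \<and>
     tn \<in> set tails5 \<and> cycle_weight (facet_weight k) (0 # tn) < facet_rhs k \<and>
     t0 \<in> set tails5 \<and> cycle_weight (facet_weight k) (0 # t0) = facet_rhs k \<and>
     list_all (\<lambda>t. t \<in> set tails5 \<and> cycle_weight (facet_weight k) (0 # t) = facet_rhs k) ts \<and> length as = length ts \<and>
     lin_cert (degree_rows @ [weight_coeffs (facet_weight k)])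
       (zip as (map (\<lambda>t. int_diff (chi_coeffs (0 # t)) (chi_coeffs (0 # t0))) ts)) d lam"

lemma facet_cert_sound:
  assumes kc: "facet_cert k t0 tn ts as d lam"
  shows "facet_normal (weight_vec (facet_weight k)) (of_int (facet_rhs k))"
proof -
  let ?f = "weight_vec (facet_weight k)" and ?\<phi> = "of_int (facet_rhs k) :: real"
  let ?rws = "degree_rows @ [weight_coeffs (facet_weight k)]"
  let ?bs = "map (\<lambda>t. int_diff (chi_coeffs (0 # t)) (chi_coeffs (0 # t0))) ts"
  have val: "?f \<bullet> chi (cycle_edges (0 # t)) = of_int (cycle_weight (facet_weight k) (0 # t))"
    if "t \<in> set tails5" for t
    by (rule inner_weight_vec_chi[OF sym_facet_weight tails5_node_orders[OF that]])
  have ham: "ham_cycle6 (cycle_edges (0 # t))" if "t \<in> set tails5" for t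
    using tails5_node_orders[OF that] ham_cycle6_iff by blast
  have "\<forall>t\<in>set tails5. ?f \<bullet> chi (cycle_edges (0 # t)) \<le> ?\<phi>"
    using kc val unfolding facet_cert_def list_all_iff by simp
  hence valid: "\<forall>T. ham_cycle6 T \<longrightarrow> ?f \<bullet> chi T \<le> ?\<phi>"
    using ham_cycle6_tails5_induct[where Q = "\<lambda>T. ?f \<bullet> chi T \<le> ?\<phi>"] by blast
  have loose: "\<exists>T. ham_cycle6 T \<and> ?f \<bullet> chi T < ?\<phi>"
    using kc ham[of tn] val[of tn] unfolding facet_cert_def by (intro exI[of _ "cycle_edges (0 # tn)"]) simp
  define T0 where "T0 = cycle_edges (0 # t0)"
  have t0: "t0 \<in> set tails5" "cycle_weight (facet_weight k) (0 # t0) = facet_rhs k"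
    using kc unfolding facet_cert_def by auto
  have T0: "ham_cycle6 T0" "?f \<bullet> chi T0 = ?\<phi>" unfolding T0_def using ham[OF t0(1)] val[OF t0(1)] t0(2) by auto
  have ts: "\<forall>t\<in>set ts. t \<in> set tails5 \<and> cycle_weight (facet_weight k) (0 # t) = facet_rhs k"
    and la: "length as = length ts" and lc: "lin_cert ?rws (zip as ?bs) d lam"
    using kc unfolding facet_cert_def list_all_iff by auto
  define v where "v i = chi (cycle_edges (0 # ts ! i)) - chi T0" for i
  let ?S = "{chi T - chi T0 | T. ham_cycle6 T \<and> ?f \<bullet> chi T = ?\<phi>}"
  have vS: "v i \<in> ?S" if "i < length ts" for i
  proof -
    have "ts ! i \<in> set tails5" "cycle_weight (facet_weight k) (0 # ts ! i) = facet_rhs k"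
      using that ts nth_mem[of i ts] by auto
    thus ?thesis unfolding v_def using ham val by fastforce
  qed
  have "x \<in> span ?S"
    if x: "x \<in> degree_kernel" "?f \<bullet> x = 0" for x
  proof -
    have "\<forall>j<length ?rws. int_form (?rws ! j) x = 0"
      using int_form_degree_rows[OF x(1)] x(2) by (auto simp: nth_append inner_weight_vec less_Suc_eq)
    hence "x = (\<Sum>i<length ?bs. (int_form (as ! i) x / of_int d) *\<^sub>R v i)"
      using la by (intro lin_cert_solution[OF lc])
        (auto simp: v_def T0_def int_diff_nth length_chi_coeffs chi_cycle_edges_edge_at)
    moreover have "(\<Sum>i<length ?bs. (int_form (as ! i) x / of_int d) *\<^sub>R v i) \<in> span ?S"
      using vS by (intro span_sum span_mul span_base) auto
    ultimately show ?thesis by simp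
  qed
  thus ?thesis unfolding facet_normal_def using valid loose T0 by blast
qed

definition perm_of_list :: "nat list \<Rightarrow> nat \<Rightarrow> nat" where "perm_of_list \<rho> i = (if i < 6 then \<rho> ! i else i)"

definition node_order :: "nat list \<Rightarrow> bool" where
  "node_order \<rho> \<longleftrightarrow> length \<rho> = 6 \<and> distinct \<rho> \<and> set \<rho> = set [0..<6]"

lemma node_order_iff: "node_order \<rho> \<longleftrightarrow> \<rho> \<in> node_orders"
  unfolding node_order_def node_orders_def by (simp add: atLeast0LessThan)

lemma perm_of_list_permutes: assumes "node_order \<rho>" shows "perm_of_list \<rho> permutes {..<6}"
proof (rule bij_imp_permutes)
  have r: "length \<rho> = 6" "distinct \<rho>" "set \<rho> = {..<6}" using assms node_order_iff unfolding node_orders_def by auto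
  show "bij_betw (perm_of_list \<rho>) {..<6} {..<6}"
  proof (rule bij_betw_imageI)
    show "inj_on (perm_of_list \<rho>) {..<6}" unfolding perm_of_list_def inj_on_def using r by (simp add: nth_eq_iff_index_eq)
    have "perm_of_list \<rho> ` {..<6} = (\<lambda>i. \<rho> ! i) ` {..<length \<rho>}" using r unfolding perm_of_list_def by auto
    also have "\<dots> = set \<rho>" by (auto simp: in_set_conv_nth)
    finally show "perm_of_list \<rho> ` {..<6} = {..<6}" using r by simp
  qed
  show "\<And>x. x \<notin> {..<6} \<Longrightarrow> perm_of_list \<rho> x = x" unfolding perm_of_list_def by simp
qed

definition same_cycle :: "nat list \<Rightarrow> nat list \<Rightarrow> bool" where
  "same_cycle vs ws \<longleftrightarrow> list_all (\<lambda>(i, j). cycle_adj vs i j = cycle_adj ws i j) edge_list"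

lemma same_cycle_imp_cycle_edges_eq: assumes "same_cycle vs ws" shows "cycle_edges vs = cycle_edges ws"
proof (rule set_eqI)
  fix e obtain i j where ij: "i < j" "j < 6" "e = edge i j" using ex_edge_ordered by blast
  have "(i, j) \<in> set edge_list" using edge_list_complete ij by simp
  hence "cycle_adj vs i j = cycle_adj ws i j" using assms unfolding same_cycle_def list_all_iff by auto
  thus "e \<in> cycle_edges vs \<longleftrightarrow> e \<in> cycle_edges ws" using ij edge_in_cycle_edges_iff by simp
qed

lemma edge_map_comp: assumes "\<sigma> permutes {..<6}" "\<rho> permutes {..<6}"
  shows "edge_map (\<rho> \<circ> \<sigma>) e = edge_map \<rho> (edge_map \<sigma> e)"
proof -
  obtain i j where ij: "i < j" "j < 6" "e = edge i j" using ex_edge_ordered by blast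
  have c: "(\<rho> \<circ> \<sigma>) permutes {..<6}" using permutes_compose[OF assms(1,2)] .
  have "\<sigma> i < 6" "\<sigma> j < 6" "\<sigma> i \<noteq> \<sigma> j" using ij permutes6_less[OF assms(1)] permutes6_neq[OF assms(1)] by auto
  thus ?thesis using ij edge_map_edge[OF c] edge_map_edge[OF assms(1)] edge_map_edge[OF assms(2)] by simp
qed

lemma chi_inject: assumes "chi T1 = chi T2" shows "T1 = T2"
proof (rule set_eqI)
  fix e have "chi T1 $ e = chi T2 $ e" using assms by simp
  thus "e \<in> T1 \<longleftrightarrow> e \<in> T2" unfolding chi_def by (auto split: if_splits)
qed

definition int_unit :: "int \<Rightarrow> nat \<Rightarrow> int list" where
  "int_unit d k = map (\<lambda>e. if e = k then d else 0) [0..<15]"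

definition perm_facet_weight :: "nat \<Rightarrow> nat list \<Rightarrow> nat \<Rightarrow> nat \<Rightarrow> int" where
  "perm_facet_weight k \<tau> i j = facet_weight k (perm_of_list \<tau> i) (perm_of_list \<tau> j)"

(* The relabelled facets J are tight on both rep and cycle0, and together with the degree rows
   they determine every x up to the multiple x\<^sub>k\<^sub>s of chi rep - chi cycle0. *)
definition rep_cert :: "nat list \<Rightarrow> (nat \<times> nat list) list \<Rightarrow> nat \<Rightarrow> int \<Rightarrow> int list list \<Rightarrow> bool" where
  "rep_cert rep J ks d lam \<longleftrightarrow> node_order rep \<and>
     list_all (\<lambda>(k, \<tau>). node_order \<tau> \<and> k < 3 \<and>
       cycle_weight (perm_facet_weight k \<tau>) rep = cycle_weight (perm_facet_weight k \<tau>) cycle0) J \<and>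
     lin_cert (degree_rows @ map (\<lambda>(k, \<tau>). weight_coeffs (perm_facet_weight k \<tau>)) J)
       [(int_unit d ks, int_diff (chi_coeffs rep) (chi_coeffs cycle0))] d lam"

definition rep_cycles :: "nat list list" where
  "rep_cycles = [[0,1,2,3,5,4],[0,1,2,4,5,3],[0,1,2,5,4,3],[0,1,3,2,5,4],[0,1,3,5,2,4],[0,1,3,5,4,2],[0,1,4,2,5,3],[0,1,4,3,5,2],[0,1,4,5,2,3],[0,1,5,3,4,2],[0,2,4,1,5,3]]"

definition rep_certs :: "((nat \<times> nat list) list \<times> nat \<times> int \<times> int list list) list" where
  "rep_certs = [([(0,[0,1,2,3,4,5]),(0,[0,2,1,3,4,5]),(0,[0,2,3,1,4,5]),(0,[2,0,1,3,4,5]),(0,[2,0,3,1,4,5]),(0,[2,0,3,4,1,5]),(0,[2,3,0,1,4,5]),(0,[2,3,0,4,1,5])],3,2,[[0,0,0,0,0,0,-2,0,0,0,0,0,0,0],[0,0,0,0,0,0,0,-2,0,0,0,0,0,0],[0,0,0,0,0,0,0,0,-2,0,0,0,0,0],[0,0,0,0,0,0,0,0,0,0,0,0,0,0],[2,0,0,0,0,0,2,2,2,0,0,0,0,0],[0,0,0,0,0,0,0,0,0,-2,0,0,0,0],[0,0,0,0,0,0,0,0,0,0,-2,0,0,0],[0,0,0,0,0,0,0,0,0,0,0,-2,0,0],[0,2,0,0,0,0,2,0,0,2,2,2,0,0],[0,0,0,0,0,0,0,0,0,0,0,0,-2,0],[0,0,0,0,0,0,0,0,0,0,0,0,0,-2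],[0,0,2,0,0,0,0,2,0,2,0,0,2,2],[1,1,1,1,1,-1,2,2,2,2,2,2,2,2],[-1,-1,-1,1,-1,1,-2,-2,0,-2,0,-2,0,-2],[-1,-1,-1,-1,1,1,-2,-2,-2,-2,-2,0,-2,0]]),([(0,[0,1,2,3,4,5]),(0,[0,2,1,3,4,5]),(0,[0,2,3,4,1,5]),(0,[2,0,1,3,4,5]),(0,[2,0,3,1,4,5]),(0,[2,0,3,4,1,5]),(0,[2,3,0,4,5,1]),(0,[2,3,4,5,0,1])],2,2,[[0,0,0,0,0,0,-2,0,0,0,0,0,0,0],[0,0,0,0,0,0,0,-2,0,0,0,0,0,0],[0,0,0,0,0,0,0,0,0,0,0,0,0,0],[0,0,0,0,0,0,0,0,-2,0,0,0,0,0],[2,0,0,0,0,0,2,2,2,0,0,0,0,0],[0,0,0,0,0,0,0,0,0,-2,0,0,0,0],[0,0,0,0,0,0,0,0,0,0,-2,0,0,0],[0,0,0,0,0,0,0,0,0,0,0,-2,0,0],[0,2,0,0,0,0,2,0,0,2,2,2,0,0],[1,1,1,1,-1,-1,2,2,0,2,2,0,0,-2],[-1,-1,1,-1,1,1,-2,0,0,0,-2,0,2,2],[0,0,0,0,0,0,0,0,0,0,0,0,-2,0],[1,1,-1,1,1,-1,2,0,2,0,2,2,-2,0],[-2,-2,0,0,0,2,-4,-2,-2,-2,-2,-2,2,2],[0,0,0,0,0,0,0,0,0,0,0,0,0,-2]]),([(0,[0,1,2,3,4,5]),(0,[0,2,1,3,4,5]),(0,[0,2,3,4,1,5]),(0,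[2,0,1,3,4,5]),(0,[2,0,3,1,4,5]),(0,[2,0,3,4,1,5]),(0,[2,3,0,4,1,5]),(0,[2,3,4,0,1,5])],2,2,[[0,0,0,0,0,0,-2,0,0,0,0,0,0,0],[0,0,0,0,0,0,0,-2,0,0,0,0,0,0],[0,0,0,0,0,0,0,0,0,0,0,0,0,0],[0,0,0,0,0,0,0,0,-2,0,0,0,0,0],[2,0,0,0,0,0,2,2,2,0,0,0,0,0],[0,0,0,0,0,0,0,0,0,-2,0,0,0,0],[0,0,0,0,0,0,0,0,0,0,-2,0,0,0],[0,0,0,0,0,0,0,0,0,0,0,-2,0,0],[0,2,0,0,0,0,2,0,0,2,2,2,0,0],[1,1,1,1,1,-1,2,2,2,2,2,2,2,2],[0,0,0,0,0,0,0,0,0,0,0,0,-2,0],[-1,-1,1,-1,-1,1,-2,0,-2,0,-2,-2,0,-2],[0,0,0,0,0,0,0,0,0,0,0,0,0,-2],[-1,-1,-1,1,-1,1,-2,-2,-2,-2,0,-2,-2,0],[0,0,0,0,2,0,0,0,2,0,0,2,2,2]]),([(0,[0,1,2,3,4,5]),(0,[0,2,1,3,4,5]),(0,[0,2,3,1,4,5]),(0,[2,0,3,4,1,5]),(0,[2,0,3,4,5,1]),(0,[2,3,0,1,4,5]),(0,[2,3,0,4,1,5]),(0,[2,3,4,0,5,1])],3,2,[[0,0,0,0,0,0,-2,0,0,0,0,0,0,0],[0,0,0,0,0,0,0,-2,0,0,0,0,0,0],[0,0,0,0,0,0,0,0,-2,0,0,0,0,0],[0,0,0,0,0,0,0,0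,0,0,0,0,0,0],[2,0,0,0,0,0,2,2,2,0,0,0,0,0],[1,1,1,-1,1,-1,2,2,0,2,0,0,2,-2],[-1,1,-1,1,-1,1,0,-2,0,0,2,0,-2,2],[0,0,0,0,0,0,0,0,0,-2,0,0,0,0],[0,0,0,0,0,0,0,0,0,0,-2,0,0,0],[0,0,0,0,0,0,0,0,0,0,0,-2,0,0],[0,0,0,0,0,0,0,0,0,0,0,0,-2,0],[-1,-1,1,1,-1,1,-2,0,0,-2,0,2,0,2],[1,-1,1,1,1,-1,0,2,2,0,-2,2,2,0],[0,0,0,0,0,0,0,0,0,0,0,0,0,-2],[-1,1,-1,-1,1,1,0,-2,-2,2,2,-2,0,0]]),([(0,[0,1,2,3,4,5]),(0,[0,2,1,3,4,5]),(0,[0,2,3,1,4,5]),(0,[2,0,3,4,1,5]),(0,[2,0,3,4,5,1]),(1,[0,3,1,4,5,2]),(1,[0,3,4,1,2,5]),(1,[0,3,4,1,5,2])],3,2,[[0,0,0,0,0,0,-2,0,0,0,0,0,0,0],[0,0,0,0,0,0,0,-2,0,0,0,0,0,0],[0,0,0,0,0,0,0,0,-2,0,0,0,0,0],[0,0,0,0,0,0,0,0,0,0,0,0,0,0],[2,0,0,0,0,0,2,2,2,0,0,0,0,0],[1,1,1,-1,-1,1,2,0,2,0,2,-2,2,0],[-1,1,-1,1,1,-1,0,0,-2,2,0,2,-2,0],[0,0,0,0,0,0,0,0,0,-2,0,0,0,0],[0,0,0,0,0,0,0,0,0,0,-2,0,0,0],[3,-1,1,1,-1,1,2,2,2,-2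,0,-2,0,-2],[-2,0,0,0,2,-2,-2,0,-2,2,-2,2,-2,2],[-2,0,0,0,0,0,-2,0,-2,0,0,2,0,0],[0,0,0,0,0,0,0,0,2,0,0,0,2,0],[-2,0,0,0,0,0,-2,-2,0,0,0,0,0,2],[2,0,0,0,0,2,2,0,0,0,2,-2,0,-2]]),([(0,[0,1,2,3,4,5]),(0,[0,2,3,1,4,5]),(0,[0,2,3,4,1,5]),(0,[2,0,3,4,1,5]),(0,[2,0,3,4,5,1]),(0,[2,3,0,4,5,1]),(0,[2,3,4,5,0,1]),(1,[0,1,2,3,4,5])],1,2,[[0,0,0,0,0,0,-2,0,0,0,0,0,0,0],[0,0,0,0,0,0,0,0,0,0,0,0,0,0],[0,0,0,0,0,0,0,-2,0,0,0,0,0,0],[0,0,0,0,0,0,0,0,-2,0,0,0,0,0],[2,0,0,0,0,0,2,2,2,0,0,0,0,0],[0,0,0,0,0,0,2,0,0,0,0,0,0,2],[0,2,0,0,0,0,0,0,0,2,2,0,0,-2],[0,0,0,0,0,0,0,0,0,-2,0,0,0,0],[0,0,0,0,0,0,0,0,0,0,-2,0,0,0],[1,-1,1,1,-1,-1,0,2,0,-2,-2,0,-2,0],[-1,1,1,-1,1,1,-2,-2,0,2,2,2,2,-2],[0,0,0,0,0,0,0,0,0,0,0,-2,0,0],[1,-1,-1,1,1,-1,2,2,2,0,-2,-2,0,2],[-2,0,0,0,0,2,-2,-2,-2,0,2,2,2,0],[0,0,0,0,0,0,0,0,0,0,0,0,-2,0]]),([(0,[0,1,2,3,4,5]),(0,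[0,2,1,3,4,5]),(0,[0,2,3,4,1,5]),(0,[2,0,3,1,4,5]),(0,[2,0,3,4,5,1]),(1,[0,3,1,2,4,5]),(1,[0,3,1,4,5,2]),(1,[0,3,4,1,2,5])],2,2,[[0,0,0,0,0,0,-2,0,0,0,0,0,0,0],[0,0,0,0,0,0,0,-2,0,0,0,0,0,0],[0,0,0,0,0,0,0,0,0,0,0,0,0,0],[0,0,0,0,0,0,0,0,-2,0,0,0,0,0],[2,0,0,0,0,0,2,2,2,0,0,0,0,0],[1,1,1,-1,-1,1,2,0,2,0,2,0,-2,2],[0,0,0,0,0,0,0,0,0,-2,0,0,0,0],[-1,1,-1,1,1,-1,0,0,-2,2,0,0,2,-2],[0,0,0,0,0,0,0,0,0,0,-2,0,0,0],[0,0,0,0,0,0,0,2,0,0,0,2,0,0],[1,-1,1,1,1,-1,0,0,0,0,-2,-2,0,-2],[-2,0,0,0,0,0,-2,0,-2,0,0,0,2,0],[0,0,0,0,0,0,0,0,2,0,0,0,0,2],[0,0,0,2,0,0,0,-2,-2,2,0,-2,0,-2],[0,0,0,-2,0,2,0,0,2,-2,2,2,-2,2]]),([(0,[0,1,2,3,4,5]),(0,[0,2,3,1,4,5]),(0,[0,2,3,4,1,5]),(0,[2,0,3,1,4,5]),(0,[2,0,3,4,5,1]),(0,[2,3,0,4,1,5]),(0,[2,3,4,0,1,5]),(1,[0,1,2,3,4,5])],1,2,[[0,0,0,0,0,0,-2,0,0,0,0,0,0,0],[0,0,0,0,0,0,0,0,0,0,0,0,0,0],[0,0,0,0,0,0,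0,-2,0,0,0,0,0,0],[0,0,0,0,0,0,0,0,-2,0,0,0,0,0],[2,0,0,0,0,0,2,2,2,0,0,0,0,0],[0,0,0,0,0,0,2,0,0,0,0,0,0,2],[0,0,0,0,0,0,0,0,0,-2,0,0,0,0],[0,2,0,0,0,0,0,0,0,2,2,0,0,-2],[0,0,0,0,0,0,0,0,0,0,-2,0,0,0],[1,-1,1,1,1,-1,0,2,2,0,-2,2,2,0],[0,0,0,0,0,0,0,0,0,0,0,-2,0,0],[-1,1,1,-1,-1,1,-2,-2,-2,0,2,0,-2,-2],[0,0,0,0,0,0,0,0,0,0,0,0,-2,0],[-1,1,-1,1,-1,1,0,0,-2,2,2,-2,0,0],[0,-2,0,0,2,0,0,0,2,-2,-2,2,2,2]]),([(0,[0,1,2,3,4,5]),(0,[0,2,1,3,4,5]),(0,[0,2,3,4,1,5]),(0,[2,0,3,1,4,5]),(0,[2,0,3,4,5,1]),(0,[2,3,0,1,4,5]),(0,[2,3,0,4,1,5]),(0,[2,3,4,5,0,1])],2,2,[[0,0,0,0,0,0,-2,0,0,0,0,0,0,0],[0,0,0,0,0,0,0,-2,0,0,0,0,0,0],[0,0,0,0,0,0,0,0,0,0,0,0,0,0],[0,0,0,0,0,0,0,0,-2,0,0,0,0,0],[2,0,0,0,0,0,2,2,2,0,0,0,0,0],[1,1,1,1,-1,-1,2,2,0,2,0,2,0,-2],[0,0,0,0,0,0,0,0,0,-2,0,0,0,0],[-1,1,-1,-1,1,1,0,-2,0,0,2,-2,0,2],[0,0,0,0,0,0,0,0,0,0,-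2,0,0,0],[0,0,0,0,0,0,0,0,0,0,0,-2,0,0],[0,0,0,0,0,0,0,0,0,0,0,0,-2,0],[-1,-1,1,-1,1,1,-2,0,0,-2,0,0,2,2],[1,-1,1,1,1,-1,0,2,2,0,-2,2,2,0],[-1,1,-1,1,-1,1,0,-2,-2,2,2,0,-2,0],[0,0,0,0,0,0,0,0,0,0,0,0,0,-2]]),([(0,[0,1,2,3,4,5]),(0,[0,2,3,1,4,5]),(0,[0,2,3,4,1,5]),(0,[2,0,3,1,4,5]),(0,[2,0,3,4,1,5]),(0,[2,3,0,4,5,1]),(1,[0,1,2,3,4,5]),(1,[0,3,1,2,4,5])],1,2,[[0,0,0,0,0,0,-2,0,0,0,0,0,0,0],[0,0,0,0,0,0,0,0,0,0,0,0,0,0],[0,0,0,0,0,0,0,-2,0,0,0,0,0,0],[0,0,0,0,0,0,0,0,-2,0,0,0,0,0],[2,0,0,0,0,0,2,2,2,0,0,0,0,0],[0,0,0,0,0,0,2,0,0,0,0,0,2,0],[0,0,0,0,0,0,0,0,0,-2,0,0,0,0],[0,0,0,0,0,0,0,0,0,0,-2,0,0,0],[0,2,0,0,0,0,0,0,0,2,2,0,-2,0],[0,0,0,0,0,0,0,2,0,0,0,0,0,2],[0,0,2,0,0,0,-2,-2,0,0,0,2,-2,-2],[0,0,0,0,0,0,0,0,0,0,0,-2,0,0],[1,1,-1,1,1,-1,2,2,2,2,2,-2,0,0],[-1,-1,1,1,-1,1,-2,-2,-2,0,-2,2,0,-2],[-1,-1,-1,-1,1,1,0,0,0,-2,0,0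,2,2]]),([(0,[0,2,3,4,1,5]),(0,[2,0,3,1,4,5]),(0,[2,3,0,4,5,1]),(1,[0,1,3,2,4,5]),(1,[0,1,3,4,2,5]),(2,[0,1,3,4,2,5]),(2,[0,1,4,2,3,5]),(2,[0,3,1,5,2,4])],1,2,[[0,0,0,0,-1,0,1,1,1,0,0,1,0,1],[0,0,0,0,0,0,0,0,0,0,0,0,0,0],[0,0,0,0,1,0,-1,1,-1,2,0,-1,0,-1],[0,0,0,0,0,0,-2,0,0,0,0,0,0,0],[2,0,0,0,0,0,2,-2,0,-2,0,0,0,0],[1,1,0,0,0,-1,1,1,-1,-2,-2,1,1,0],[0,0,0,0,0,0,0,-2,0,0,0,0,0,0],[0,0,0,0,1,0,1,-1,-1,0,2,-1,0,-1],[-1,1,0,0,0,1,-3,1,1,2,0,-1,-1,0],[0,0,1,1,-1,0,-1,1,1,0,0,1,-1,0],[-1,-1,1,-1,1,1,0,-2,2,2,2,-2,0,0],[0,0,0,0,0,0,0,0,-2,0,0,0,0,0],[1,1,-1,1,0,-1,1,1,-1,-2,-2,1,0,1],[-1,-1,0,0,0,1,1,-1,1,0,2,-1,1,0],[0,0,0,0,0,0,0,2,0,0,-2,2,0,0]])]"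

(* For each second cycle 0 # t, a relabelling fixing cycle0 that maps it to a representative. *)
definition canon_table :: "(nat list \<times> nat) list" where
  "canon_table = [([0,1,2,3,4,5],0),([0,1,2,3,4,5],0),([1,2,3,4,5,0],0),([0,1,2,3,4,5],1),([2,1,0,5,4,3],1),([0,1,2,3,4,5],2),([2,3,4,5,0,1],0),([0,1,2,3,4,5],3),([1,2,3,4,5,0],1),([5,4,3,2,1,0],1),([0,1,2,3,4,5],4),([0,1,2,3,4,5],5),([1,0,5,4,3,2],1),([0,1,2,3,4,5],6),([1,2,3,4,5,0],2),([0,1,2,3,4,5],7),([0,1,2,3,4,5],8),([4,5,0,1,2,3],3),([4,5,0,1,2,3],1),([1,0,5,4,3,2],7),([4,5,0,1,2,3],5),([0,1,2,3,4,5],9),([2,3,4,5,0,1],3),([4,5,0,1,2,3],0),([3,4,5,0,1,2],0),([2,3,4,5,0,1],9),([1,2,3,4,5,0],3),([2,1,0,5,4,3],7),([3,4,5,0,1,2],5),([3,4,5,0,1,2],1),([2,3,4,5,0,1],1),([2,3,4,5,0,1],5),([4,3,2,1,0,5],1),([4,5,0,1,2,3],0),([4,5,0,1,2,3],4),([4,5,0,1,2,3],3),([1,2,3,4,5,0],4),([0,1,2,3,4,5],10),([1,2,3,4,5,0],5),([0,1,2,3,4,5],9),([2,3,4,5,0,1],4),([0,1,2,3,4,5],5),([3,4,5,0,1,2],4),([3,4,5,0,1,2],6),([2,3,4,5,0,1],10),([0,1,2,3,4,5],7),([2,3,4,5,0,1],6),([5,4,3,2,1,0],1),([0,5,4,3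,2,1],1),([2,3,4,5,0,1],7),([1,2,3,4,5,0],6),([2,3,4,5,0,1],6),([1,2,3,4,5,0],10),([2,3,4,5,0,1],4),([2,3,4,5,0,1],2),([3,2,1,0,5,4],1),([1,2,3,4,5,0],7),([2,3,4,5,0,1],3),([4,5,0,1,2,3],6),([0,1,2,3,4,5],8),([1,2,3,4,5,0],8),([3,4,5,0,1,2],6),([5,0,1,2,3,4],3),([1,0,5,4,3,2],7),([3,4,5,0,1,2],1),([0,1,2,3,4,5],2),([5,0,1,2,3,4],4),([0,1,2,3,4,5],10),([5,0,1,2,3,4],6),([0,1,2,3,4,5],6),([2,1,0,5,4,3],7),([0,1,2,3,4,5],1),([5,0,1,2,3,4],1),([5,0,1,2,3,4],6),([0,5,4,3,2,1],7),([2,3,4,5,0,1],10),([4,5,0,1,2,3],6),([4,5,0,1,2,3],4),([5,0,1,2,3,4],5),([5,0,1,2,3,4],4),([1,2,3,4,5,0],9),([4,5,0,1,2,3],5),([1,2,3,4,5,0],10),([0,1,2,3,4,5],4),([3,4,5,0,1,2],3),([3,4,5,0,1,2],4),([5,0,1,2,3,4],0),([4,5,0,1,2,3],1),([3,4,5,0,1,2],5),([2,1,0,5,4,3],1),([3,2,1,0,5,4],1),([2,3,4,5,0,1],5),([2,3,4,5,0,1],7),([0,1,2,3,4,5],3),([2,3,4,5,0,1],9),([0,1,2,3,4,5],0),([5,0,1,2,3,4],0),([5,0,1,2,3,4],3),([1,2,3,4,5,0],9),([1,2,3,4,5,0],5),([1,2,3,4,5,0],7),([4,3,2,1,0,5]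,1),([3,4,5,0,1,2],3),([1,2,3,4,5,0],8),([0,5,4,3,2,1],7),([1,2,3,4,5,0],2),([1,2,3,4,5,0],6),([1,2,3,4,5,0],1),([5,0,1,2,3,4],5),([1,2,3,4,5,0],4),([5,0,1,2,3,4],1),([1,0,5,4,3,2],1),([1,2,3,4,5,0],3),([1,2,3,4,5,0],0),([2,3,4,5,0,1],2),([2,3,4,5,0,1],1),([0,5,4,3,2,1],1),([2,3,4,5,0,1],0),([3,4,5,0,1,2],0),([0,1,2,3,4,5],0)]"

lemma facet_cert_nonneg: "facet_cert 0 [2,1,3,4,5] [1,2,3,4,5] [[2,1,3,5,4],[2,1,4,3,5],[2,1,4,5,3],[2,1,5,3,4],[2,3,1,4,5],[2,4,1,3,5],[2,5,1,3,4],[3,1,2,4,5]] [[0,-12,-12,24,0,12,12,0,-24,0,-12,12,-12,12,0],[0,-30,-6,18,18,18,-6,18,-30,4,-20,28,4,4,-20],[0,18,18,-18,-18,-6,-6,6,6,-12,0,0,0,0,12],[0,9,-3,-3,-3,-3,-15,-15,33,14,14,-34,2,2,2],[0,-6,-6,6,6,-6,-6,6,6,28,-8,-8,-8,-8,4],[0,21,-3,-15,-3,-15,9,-3,9,-14,22,-14,-2,10,-2],[0,-6,6,6,-6,-6,6,6,-6,-8,-8,28,4,-8,-8],[0,-27,9,9,9,9,-3,-3,-3,6,6,6,-6,-6,-6]] 48 [[0,0,0,0,0,0,-48],[12,0,9,-3,-3,-3,12],[12,0,-3,9,-3,-3,12],[12,0,-3,-3,9,-3,12],[12,0,-3,-3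,-3,9,12],[0,12,9,-3,-3,-3,12],[0,12,-3,9,-3,-3,12],[0,12,-3,-3,9,-3,12],[0,12,-3,-3,-3,9,12],[-4,-4,10,10,-2,-2,-8],[-4,-4,10,-2,10,-2,-8],[-4,-4,10,-2,-2,10,-8],[-4,-4,-2,10,10,-2,-8],[-4,-4,-2,10,-2,10,-8],[-4,-4,-2,-2,10,10,-8]]"
  by code_simp

lemma facet_cert_subtour: "facet_cert 1 [1,2,3,4,5] [1,3,2,4,5] [[1,2,3,5,4],[1,2,4,3,5],[1,2,4,5,3],[1,2,5,3,4],[1,3,4,5,2],[1,4,3,5,2],[1,5,3,4,2],[2,1,3,4,5]] [[3,3,-17,10,1,-6,10,1,-8,10,1,-8,-15,12,3],[12,-6,-20,-2,16,-6,16,-2,-20,-2,16,-2,-6,12,-6],[-3,-3,20,-7,-7,6,-7,2,2,-7,2,2,-3,-3,6],[-6,-6,10,10,-8,12,-8,-8,10,-8,-8,10,12,-6,-6],[15,-3,-10,-1,-1,-12,17,-10,-10,-1,8,8,-3,-3,6],[-3,6,2,-7,2,-3,-7,20,-7,2,-7,2,-3,6,-3],[-3,6,2,2,-7,-3,-7,-7,20,2,2,-7,6,-3,-3],[-18,9,3,3,3,9,3,3,3,-6,-6,-6,0,0,0]] 36 [[3,3,-6,0,0,0,12],[3,-6,3,0,0,0,12],[10,1,1,6,-3,-3,-8],[10,1,1,-3,6,-3,-8],[10,1,1,-3,-3,6,-8],[-6,3,3,0,0,0,12],[1,10,1,6,-3,-3,-8],[1,10,1,-3,6,-3,-8],[1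,10,1,-3,-3,6,-8],[1,1,10,6,-3,-3,-8],[1,1,10,-3,6,-3,-8],[1,1,10,-3,-3,6,-8],[-6,-6,-6,9,9,0,12],[-6,-6,-6,9,0,9,12],[-6,-6,-6,0,9,9,12]]"
  by code_simp

lemma facet_cert_comb: "facet_cert 2 [1,2,5,4,3] [1,2,3,4,5] [[1,4,2,5,3],[1,4,3,5,2],[1,4,5,2,3],[2,1,4,5,3],[2,5,1,4,3],[2,5,4,1,3],[3,4,1,2,5],[3,5,2,1,4]] [[10,-11,18,-19,2,-11,2,-3,2,-19,44,-3,-11,10,-11],[15,15,-36,3,3,-6,3,6,-18,3,-18,6,15,15,-6],[10,-11,-3,2,2,-11,-19,18,2,44,-19,-3,-11,-11,10],[-6,15,6,-18,3,15,-18,6,3,3,3,-36,-6,15,15],[-11,10,18,2,-19,-11,-19,-3,44,2,2,-3,10,-11,-11],[-11,10,-3,2,2,-11,44,-3,-19,-19,2,18,-11,-11,10],[-11,-11,-3,-19,44,10,2,18,-19,2,2,-3,10,-11,-11],[-11,-11,-3,44,-19,10,2,-3,2,2,-19,18,-11,10,-11]] 84 [[15,15,-6,-4,-4,-4,4],[15,-6,15,-4,-4,-4,4],[6,-15,-15,18,-3,-3,24],[24,3,3,-5,16,-5,-16],[24,3,3,-5,-5,16,-16],[-6,15,15,-4,-4,-4,4],[3,24,3,16,-5,-5,-16],[-15,6,-15,-3,18,-3,24],[3,24,3,-5,-5,16,-16],[3,3,24,16,-5,-5,-16],[3,3,24,-5,16,-5,-16],[-15,-15,6,-3,-3,18,2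4],[-6,-6,-6,17,17,-4,4],[-6,-6,-6,17,-4,17,4],[-6,-6,-6,-4,17,17,4]]"
  by code_simp

lemma facet_normal_facet_weight: "\<forall>k<3. facet_normal (weight_vec (facet_weight k)) (of_int (facet_rhs k))"
proof (intro allI impI)
  fix k :: nat assume "k < 3"
  hence "k = 0 \<or> k = 1 \<or> k = 2" by auto
  thus "facet_normal (weight_vec (facet_weight k)) (of_int (facet_rhs k))"
    using facet_cert_sound[OF facet_cert_nonneg] facet_cert_sound[OF facet_cert_subtour]
      facet_cert_sound[OF facet_cert_comb] by auto
qed

lemma sym_perm_facet_weight: "sym_weight (perm_facet_weight k \<tau>)"
  using sym_facet_weight unfolding sym_weight_def perm_facet_weight_def by simp

lemma facet_normal_perm_facet_weight:
  assumes "node_order \<tau>" "k < 3"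
  shows "facet_normal (weight_vec (perm_facet_weight k \<tau>)) (of_int (facet_rhs k))"
proof -
  have "vec_perm (perm_of_list \<tau>) (weight_vec (facet_weight k)) = weight_vec (perm_facet_weight k \<tau>)"
    unfolding perm_facet_weight_def by (rule vec_perm_weight_vec[OF perm_of_list_permutes[OF assms(1)] sym_facet_weight])
  thus ?thesis using facet_normal_vec_perm[OF perm_of_list_permutes[OF assms(1)]] facet_normal_facet_weight assms(2)
    by metis
qed

lemma rep_cert_sound:
  assumes rc: "rep_cert rep J ks d lam"
  shows "facet_determined (chi (cycle_edges rep) - chi (cycle_edges cycle0))"
proof -
  let ?g = "chi (cycle_edges rep) - chi (cycle_edges cycle0)"
  let ?F = "(\<lambda>(k, \<tau>). weight_vec (perm_facet_weight k \<tau>)) ` set J"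
  let ?rws = "degree_rows @ map (\<lambda>(k, \<tau>). weight_coeffs (perm_facet_weight k \<tau>)) J"
  have rep: "rep \<in> node_orders" using rc node_order_iff unfolding rep_cert_def by simp
  have J: "\<forall>(k, \<tau>)\<in>set J. node_order \<tau> \<and> k < 3 \<and>
      cycle_weight (perm_facet_weight k \<tau>) rep = cycle_weight (perm_facet_weight k \<tau>) cycle0"
    using rc unfolding rep_cert_def list_all_iff by simp
  have lc: "lin_cert ?rws [(int_unit d ks, int_diff (chi_coeffs rep) (chi_coeffs cycle0))] d lam"
    using rc unfolding rep_cert_def by auto
  have normals: "\<forall>f\<in>?F. (\<exists>\<phi>. facet_normal f \<phi>) \<and> f \<bullet> ?g = 0"
  proof
    fix f assume "f \<in> ?F"
    then obtain k \<tau> where k\<tau>: "(k, \<tau>) \<in> set J" "f = weight_vec (perm_facet_weight k \<tau>)" by auto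
    have h: "node_order \<tau>" "k < 3" "cycle_weight (perm_facet_weight k \<tau>) rep = cycle_weight (perm_facet_weight k \<tau>) cycle0"
      using J k\<tau>(1) by auto
    have "f \<bullet> ?g = 0" unfolding k\<tau>(2) inner_diff_right
      using inner_weight_vec_chi[OF sym_perm_facet_weight rep]
        inner_weight_vec_chi[OF sym_perm_facet_weight cycle0_node_orders] h(3)
      by simp
    thus "(\<exists>\<phi>. facet_normal f \<phi>) \<and> f \<bullet> ?g = 0" using facet_normal_perm_facet_weight[OF h(1,2)] k\<tau>(2) by blast
  qed
  have "\<exists>s. y = s *\<^sub>R ?g" if y: "y \<in> degree_kernel" "\<forall>f\<in>?F. f \<bullet> y = 0" for y
  proof -
    have "int_form (?rws ! j) y = 0" if j: "j < length ?rws" for j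
    proof (cases "j < length degree_rows")
      case True thus ?thesis using int_form_degree_rows[OF y(1)] by (simp add: nth_append)
    next
      case False
      define j' where "j' = j - length degree_rows"
      obtain k \<tau> where k\<tau>: "J ! j' = (k, \<tau>)" by (cases "J ! j'")
      have "j' < length J" using j False unfolding j'_def by simp
      hence "(k, \<tau>) \<in> set J" using nth_mem[of j' J] k\<tau> by simp
      moreover have "?rws ! j = weight_coeffs (perm_facet_weight k \<tau>)"
        using False k\<tau> \<open>j' < length J\<close> by (simp add: nth_append j'_def[symmetric])
      ultimately show ?thesis using y(2) by (auto simp: inner_weight_vec[symmetric])
    qed
    moreover have "lin_cert ?rws (zip [int_unit d ks] [int_diff (chi_coeffs rep) (chi_coeffs cycle0)]) d lam"
      using lc by simp
    ultimately have "y = (\<Sum>i<length [int_diff (chi_coeffs rep) (chi_coeffs cycle0)].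
        (int_form ([int_unit d ks] ! i) y / of_int d) *\<^sub>R ?g)"
      by (intro lin_cert_solution[where w = "\<lambda>_. ?g"])
        (auto simp: int_diff_nth length_chi_coeffs chi_cycle_edges_edge_at)
    thus ?thesis by (intro exI) simp
  qed
  thus ?thesis unfolding facet_determined_def using normals by blast
qed

lemma rep_certs_check: "list_all2 (\<lambda>rep (J, ks, d, lam). rep_cert rep J ks d lam) rep_cycles rep_certs"
  by code_simp

lemma facet_determined_rep_cycles:
  "r < length rep_cycles \<Longrightarrow> facet_determined (chi (cycle_edges (rep_cycles ! r)) - chi (cycle_edges cycle0))"
proof -
  assume r: "r < length rep_cycles"
  obtain J ks d lam where "rep_certs ! r = (J, ks, d, lam)" by (metis prod.exhaust)
  moreover have "case rep_certs ! r of (J, ks, d, lam) \<Rightarrow> rep_cert (rep_cycles ! r) J ks d lam"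
    using rep_certs_check r unfolding list_all2_conv_all_nth by auto
  ultimately show ?thesis using rep_cert_sound by simp
qed

definition canon_table_ok :: "nat list \<Rightarrow> nat list \<times> nat \<Rightarrow> bool" where
  "canon_table_ok t x \<longleftrightarrow> same_cycle (0 # t) cycle0 \<or> (node_order (fst x) \<and> snd x < length rep_cycles \<and>
     same_cycle (map (perm_of_list (fst x)) cycle0) cycle0 \<and>
     same_cycle (map (perm_of_list (fst x)) (0 # t)) (rep_cycles ! snd x))"

lemma canon_table_check: "list_all2 canon_table_ok tails5 canon_table"
  by code_simp

section \<open>Pairs of Hamiltonian cycles\<close>

lemma cycle0_nth: "k < 6 \<Longrightarrow> cycle0 ! k = k"
  unfolding cycle0_def using less_6_cases[of k] by auto

lemma inj_edge_map: assumes "\<sigma> permutes {..<6}" shows "inj (edge_map \<sigma>)"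
  by (metis edge_map_inv_left[OF assms] injI)

lemma ham_cycle6_pair_to_cycle0:
  assumes T1: "ham_cycle6 T1" and T2: "ham_cycle6 T2"
  obtains \<sigma> t where "\<sigma> permutes {..<6}" "t \<in> set tails5"
    "edge_map \<sigma> ` T1 = cycle_edges cycle0" "edge_map \<sigma> ` T2 = cycle_edges (0 # t)"
proof -
  obtain vs1 where vs1: "vs1 \<in> node_orders" "T1 = cycle_edges vs1" using T1 ham_cycle6_iff by blast
  obtain vs2 where vs2: "vs2 \<in> node_orders" "T2 = cycle_edges vs2" using T2 ham_cycle6_iff by blast
  have \<pi>: "perm_of_list vs1 permutes {..<6}" using perm_of_list_permutes vs1(1) node_order_iff by blast
  define \<sigma> where "\<sigma> = inv (perm_of_list vs1)"
  have \<sigma>: "\<sigma> permutes {..<6}" unfolding \<sigma>_def using permutes_inv[OF \<pi>] .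
  have l1: "length vs1 = 6" using vs1(1) unfolding node_orders_def by simp
  have "map \<sigma> vs1 = cycle0"
  proof (rule nth_equalityI)
    show "length (map \<sigma> vs1) = length cycle0" using l1 by (simp add: cycle0_def)
    fix k assume "k < length (map \<sigma> vs1)"
    hence k: "k < 6" using l1 by simp
    have "vs1 ! k = perm_of_list vs1 k" unfolding perm_of_list_def using k by simp
    hence "\<sigma> (vs1 ! k) = k" unfolding \<sigma>_def using permutes_inverses(2)[OF \<pi>] by simp
    thus "map \<sigma> vs1 ! k = cycle0 ! k" using k l1 cycle0_nth by simp
  qed
  hence e1: "edge_map \<sigma> ` T1 = cycle_edges cycle0" using cycle_edges_map[OF \<sigma> vs1(1)] vs1(2) by simp
  obtain t where t: "t \<in> set tails5" "cycle_edges (map \<sigma> vs2) = cycle_edges (0 # t)"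
    using cycle_edges_canonical[OF map_node_orders[OF \<sigma> vs2(1)]] by blast
  have "edge_map \<sigma> ` T2 = cycle_edges (0 # t)" using cycle_edges_map[OF \<sigma> vs2(1)] vs2(2) t(2) by simp
  with \<sigma> t(1) e1 show thesis by (rule that)
qed

lemma canon_table_rep:
  assumes t: "t \<in> set tails5" and ne: "cycle_edges (0 # t) \<noteq> cycle_edges cycle0"
  obtains \<rho> r where "\<rho> permutes {..<6}" "r < length rep_cycles"
    "edge_map \<rho> ` cycle_edges cycle0 = cycle_edges cycle0"
    "edge_map \<rho> ` cycle_edges (0 # t) = cycle_edges (rep_cycles ! r)"
proof -
  obtain i where i: "i < length tails5" "tails5 ! i = t" using t by (metis in_set_conv_nth)
  have "canon_table_ok t (canon_table ! i)"
    using canon_table_check i unfolding list_all2_conv_all_nth by auto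
  moreover have "\<not> same_cycle (0 # t) cycle0" using ne same_cycle_imp_cycle_edges_eq by blast
  ultimately obtain \<rho> r where tb: "node_order \<rho>" "r < length rep_cycles"
    "same_cycle (map (perm_of_list \<rho>) cycle0) cycle0" "same_cycle (map (perm_of_list \<rho>) (0 # t)) (rep_cycles ! r)"
    unfolding canon_table_ok_def by auto
  have \<rho>: "perm_of_list \<rho> permutes {..<6}" by (rule perm_of_list_permutes[OF tb(1)])
  show thesis
  proof (rule that[OF \<rho> tb(2)])
    show "edge_map (perm_of_list \<rho>) ` cycle_edges cycle0 = cycle_edges cycle0"
      using cycle_edges_map[OF \<rho> cycle0_node_orders] same_cycle_imp_cycle_edges_eq[OF tb(3)] by simp
    show "edge_map (perm_of_list \<rho>) ` cycle_edges (0 # t) = cycle_edges (rep_cycles ! r)"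
      using cycle_edges_map[OF \<rho> tails5_node_orders[OF t]] same_cycle_imp_cycle_edges_eq[OF tb(4)] by simp
  qed
qed

lemma ham_cycle6_pair_to_rep:
  assumes T1: "ham_cycle6 T1" and T2: "ham_cycle6 T2" and ne: "T1 \<noteq> T2"
  obtains \<sigma> r where "\<sigma> permutes {..<6}" "r < length rep_cycles"
    "edge_map \<sigma> ` T1 = cycle_edges cycle0" "edge_map \<sigma> ` T2 = cycle_edges (rep_cycles ! r)"
proof -
  obtain \<sigma> t where \<sigma>: "\<sigma> permutes {..<6}" "t \<in> set tails5"
    "edge_map \<sigma> ` T1 = cycle_edges cycle0" "edge_map \<sigma> ` T2 = cycle_edges (0 # t)"
    using ham_cycle6_pair_to_cycle0[OF T1 T2] .
  have "cycle_edges (0 # t) \<noteq> cycle_edges cycle0"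
  proof
    assume "cycle_edges (0 # t) = cycle_edges cycle0"
    hence "edge_map \<sigma> ` T1 = edge_map \<sigma> ` T2" using \<sigma>(3,4) by simp
    thus False using ne inj_image_eq_iff[OF inj_edge_map[OF \<sigma>(1)]] by blast
  qed
  then obtain \<rho> r where \<rho>: "\<rho> permutes {..<6}" "r < length rep_cycles"
    "edge_map \<rho> ` cycle_edges cycle0 = cycle_edges cycle0"
    "edge_map \<rho> ` cycle_edges (0 # t) = cycle_edges (rep_cycles ! r)"
    using canon_table_rep[OF \<sigma>(2)] by blast
  have "edge_map (\<rho> \<circ> \<sigma>) ` T = edge_map \<rho> ` edge_map \<sigma> ` T" for T
    by (simp add: image_image edge_map_comp[OF \<sigma>(1) \<rho>(1)])
  thus thesis using that[OF permutes_compose[OF \<sigma>(1) \<rho>(1)] \<rho>(2)] \<sigma>(3,4) \<rho>(3,4) by simp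
qed

lemma is_circuit_chi_diff:
  assumes md: "minimal_description P_TSP6 eqs ineqs"
    and T1: "ham_cycle6 T1" and T2: "ham_cycle6 T2" and ne: "T1 \<noteq> T2"
  shows "is_circuit eqs ineqs (chi T2 - chi T1)"
proof -
  obtain \<sigma> r where \<sigma>: "\<sigma> permutes {..<6}" "r < length rep_cycles"
    "edge_map \<sigma> ` T1 = cycle_edges cycle0" "edge_map \<sigma> ` T2 = cycle_edges (rep_cycles ! r)"
    using ham_cycle6_pair_to_rep[OF T1 T2 ne] .
  have chi: "chi T = vec_perm \<sigma> (chi (edge_map \<sigma> ` T))" for T
    using chi_image_edge_map[OF \<sigma>(1)] vec_perm_inv[OF \<sigma>(1)] by simp
  have "chi T2 - chi T1 = vec_perm \<sigma> (chi (cycle_edges (rep_cycles ! r)) - chi (cycle_edges cycle0))"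
    using chi[of T1] chi[of T2] \<sigma>(3,4) by (simp add: vec_perm_diff)
  hence "facet_determined (chi T2 - chi T1)"
    using facet_determined_vec_perm[OF \<sigma>(1) facet_determined_rep_cycles[OF \<sigma>(2)]] by simp
  moreover have "chi T2 - chi T1 \<noteq> 0" using ne chi_inject by force
  ultimately show ?thesis using is_circuit_if_facet_determined[OF md T1 T2] by blast
qed

lemma ex_two_ham_cycle6: "\<exists>T T'. ham_cycle6 T \<and> ham_cycle6 T' \<and> T \<noteq> T'"
proof -
  have "[1,2,3,4,5] \<in> set tails5" "[2,1,3,4,5] \<in> set tails5" unfolding tails5_def by code_simp+
  hence "ham_cycle6 (cycle_edges [0,1,2,3,4,5])" "ham_cycle6 (cycle_edges [0,2,1,3,4,5])"
    using tails5_node_orders ham_cycle6_iff by blast+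
  moreover have "cycle_adj [0,1,2,3,4,5] 0 1" "\<not> cycle_adj [0,2,1,3,4,5] 0 1" by code_simp+
  hence "cycle_edges [0,1,2,3,4,5] \<noteq> cycle_edges [0,2,1,3,4,5]"
    using edge_in_cycle_edges_iff[of 0 1] by auto
  ultimately show ?thesis by blast
qed

theorem lemma7:
  fixes eqs ineqs :: "((real ^ edge6) \<times> real) list"
  assumes "minimal_description P_TSP6 eqs ineqs"
  shows "circuit_diameter eqs ineqs = 1"
proof -
  have P: "lin_sys_set eqs ineqs = P_TSP6" using assms unfolding minimal_description_def by simp
  have vertex: "\<exists>T. ham_cycle6 T \<and> u = chi T" if "u extreme_point_of P_TSP6" for u
    using extreme_point_of_convex_hull that unfolding P_TSP6_def by blast
  have circ: "is_circuit eqs ineqs (v - u)"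
    if "u extreme_point_of P_TSP6" "v extreme_point_of P_TSP6" "u \<noteq> v" for u v
    using vertex[OF that(1)] vertex[OF that(2)] that(3) is_circuit_chi_diff[OF assms] by blast
  obtain T T' where T: "ham_cycle6 T" "ham_cycle6 T'" "T \<noteq> T'" using ex_two_ham_cycle6 by blast
  have "compact P_TSP6" "convex P_TSP6"
    unfolding P_TSP6_def by (simp_all add: finite_imp_compact_convex_hull)
  then obtain u v where "u extreme_point_of P_TSP6" "v extreme_point_of P_TSP6" "u \<noteq> v"
    using two_extreme_points chi_in_P_TSP6[OF T(1)] chi_in_P_TSP6[OF T(2)] chi_inject T(3) by metis
  thus ?thesis using circuit_diameter_eq_1I[of eqs ineqs] circ unfolding P by blast
qed

end
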